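(* Let $f\in S_d(M,L,\alpha,R)$. For all $0<h<\frac{R}{2}$ and $\lambda\in\mathbb{R}$, the map $F_{\lambda,h}$ is a deformation retraction of $\mathcal{K}_{\lambda,h}$ onto $\mathcal{G}_{\lambda,h}$. Furthermore, $\mathcal{F}_{\lambda}^{h}\subset \mathcal{K}_{\lambda,h}\subset \mathcal{F}_{\lambda}^{2h}$ and $\mathcal{F}_{\lambda}\subset\mathcal{G}_{\lambda,h}\subset \mathcal{F}_{\lambda+L(1+3^{\alpha})h^{\alpha}}$.
   Context: $S_d(M,L,\alpha,R)$: functions $f:[0,1]^d\to\mathbb{R}$ with (A0) $|f|\le M$; (A1) disjoint open sets $M_1,\dots,M_l\subset[0,1]^d$ with $\bigcup_i\overline{M_i}=[0,1]^d$ and $|f(x)-f(y)|\le L\|x-y\|_2^\alpha$ for $x,y$ in a common $M_i$; (A2) $\liminf_{x\to x_0,x\in\bigcup_iM_i}f(x)=f(x_0)$ for all $x_0$; (A3) $\Gamma:=\bigcup_i\partial M_i\cap]0,1[^d$ is a $C^{1,1}$ hypersurface with reach at least $R$ and Hausdorff distance to $\partial[0,1]^d$ at least $R$ (reach: supremum of $r$ such that every point at distance $<r$ from $\Gamma$ has a unique nearest point in $\Gamma$). Notation: $\mathcal{F}_\lambda=f^{-1}(]-\infty,\lambda])$; $\operatorname{dist}(x,A)=\inf_{a\in A}\|x-a\|_2$; $A^b=\{x\in[0,1]^d:\operatorname{dist}(x,A)\le b\}$. For $x$ with $\operatorname{dist}(x,\Gamma)<R$, $\xi(x)$ denotes the unique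 nearest point of $\Gamma$ to $x$. $[x,y]$ is the line segment. $S_{\lambda,h}=\left(\Gamma^{h}\setminus\mathcal{F}_{\lambda+Lh^\alpha}\right)\cap\mathcal{F}_\lambda^h$; $\mathcal{K}_{\lambda,h}=\mathcal{F}_\lambda^h\cup\bigcup_{z\in S_{\lambda,h}}[z,\xi(z)]$. Condition (C1) for $x$: there exists $i$ with $x\in\left(\bigcup_{z\in S_{\lambda,h}}[z,\xi(z)]\right)\cap M_i$ and $\operatorname{dist}(\xi(x),M_i\cap\mathcal{F}_{\lambda+Lh^\alpha})\ge 2h-\|x-\xi(x)\|_2$. $F_{\lambda,h}:\mathcal{K}_{\lambda,h}\times[0,1]\to\mathcal{K}_{\lambda,h}$: if $x$ satisfies (C1) with index $i$, $F_{\lambda,h}(x,t)=(1-t)x+t\left(\xi(x)+\left(2h-\operatorname{dist}(\xi(x),M_i\cap\mathcal{F}_{\lambda+Lh^\alpha})\right)_+\frac{x-\xi(x)}{\|x-\xi(x)\|_2}\right)$; otherwise $F_{\lambda,h}(x,t)=x$. Here $(u)_+=\max(u,0)$. $\mathcal{G}_{\lambda,h}=\{F_{\lambda,h}(x,1):x\in\mathcal{K}_{\lambda,h}\}$. A deformation retraction of $X$ onto $A\subset X$ is a continuous $F:X\times[0,1]\to X$ with $F(x,0)=x$, $F(x,1)\in A$ for all $x\in X$, and $F(a,1)=a$ for all $a\in A$. *)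

theory Defs
  imports "HOL-Analysis.Analysis"
begin

text \<open>Ambient space: an arbitrary Euclidean space 'a with d = DIM('a);
  the unit cube [0,1]^d is cbox 0 One, its interior ]0,1[^d is box 0 One.\<close>

abbreviation cube :: "'a::euclidean_space set" where
  "cube \<equiv> cbox 0 One"

definition sdist :: "'a::euclidean_space \<Rightarrow> 'a set \<Rightarrow> ereal" where
  "sdist x A = (if A = {} then \<infinity> else ereal (infdist x A))"

definition thick :: "'a::euclidean_space set \<Rightarrow> real \<Rightarrow> 'a set" where
  "thick A b = {x \<in> cube. sdist x A \<le> ereal b}"

definition sublevel :: "('a::euclidean_space \<Rightarrow> real) \<Rightarrow> real \<Rightarrow> 'a set" where
  "sublevel f lam = {x \<in> cube. f x \<le> lam}"

definition Gam :: "'a::euclidean_space set set \<Rightarrow> 'a set" where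
  "Gam Ms = (\<Union>M\<in>Ms. frontier M) \<inter> box 0 One"

definition C11_hypersurface :: "'a::euclidean_space set \<Rightarrow> bool" where
  "C11_hypersurface S \<longleftrightarrow>
     (\<forall>p\<in>S. \<exists>U g gr K. open U \<and> p \<in> U \<and>
        (\<forall>x\<in>U. (g has_derivative (\<lambda>v. gr x \<bullet> v)) (at x)) \<and>
        (\<forall>x\<in>U. gr x \<noteq> 0) \<and>
        (\<forall>x\<in>U. \<forall>y\<in>U. norm (gr x - gr y) \<le> K * norm (x - y)) \<and>
        S \<inter> U = {x\<in>U. (g x :: real) = 0})"

text \<open>reach(S) >= R: every point at distance < R from S has a unique nearest point in S
  (equivalent to: the supremum of admissible r is at least R).\<close>
definition reach_ge :: "'a::euclidean_space set \<Rightarrow> real \<Rightarrow> bool" where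
  "reach_ge S R \<longleftrightarrow>
     (\<forall>x. sdist x S < ereal R \<longrightarrow> (\<exists>!y. y \<in> S \<and> dist x y = infdist x S))"

definition xi :: "'a::euclidean_space set \<Rightarrow> 'a \<Rightarrow> 'a" where
  "xi S x = (THE y. y \<in> S \<and> dist x y = infdist x S)"

text \<open>The class S_d(M,L,alpha,R), with the partition M_1..M_l given explicitly as
  the finite family Ms.\<close>
definition in_S ::
  "('a::euclidean_space \<Rightarrow> real) \<Rightarrow> 'a set set \<Rightarrow> real \<Rightarrow> real \<Rightarrow> real \<Rightarrow> real \<Rightarrow> bool" where
  "in_S f Ms Mb L \<alpha> R \<longleftrightarrow>
     0 < \<alpha> \<and> \<alpha> \<le> 1 \<and>
     (\<forall>x\<in>cube. \<bar>f x\<bar> \<le> Mb) \<and>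
     finite Ms \<and> (\<forall>M\<in>Ms. open M \<and> M \<subseteq> cube) \<and>
     (\<forall>M1\<in>Ms. \<forall>M2\<in>Ms. M1 \<noteq> M2 \<longrightarrow> M1 \<inter> M2 = {}) \<and>
     (\<Union>M\<in>Ms. closure M) = cube \<and>
     (\<forall>M\<in>Ms. \<forall>x\<in>M. \<forall>y\<in>M. \<bar>f x - f y\<bar> \<le> L * norm (x - y) powr \<alpha>) \<and>
     (\<forall>x0\<in>cube. Liminf (at x0 within (\<Union>Ms)) (\<lambda>x. ereal (f x)) = ereal (f x0)) \<and>
     C11_hypersurface (Gam Ms) \<and> reach_ge (Gam Ms) R \<and>
     (\<forall>x\<in>Gam Ms. infdist x (frontier cube) \<ge> R)"

definition Sset where
  "Sset f Ms L \<alpha> lam h =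
     (thick (Gam Ms) h - sublevel f (lam + L * h powr \<alpha>)) \<inter> thick (sublevel f lam) h"

definition segs where
  "segs f Ms L \<alpha> lam h = (\<Union>z\<in>Sset f Ms L \<alpha> lam h. closed_segment z (xi (Gam Ms) z))"

definition Kset where
  "Kset f Ms L \<alpha> lam h = thick (sublevel f lam) h \<union> segs f Ms L \<alpha> lam h"

definition C1 where
  "C1 f Ms L \<alpha> lam h M x \<longleftrightarrow> M \<in> Ms \<and> x \<in> segs f Ms L \<alpha> lam h \<inter> M \<and>
     sdist (xi (Gam Ms) x) (M \<inter> sublevel f (lam + L * h powr \<alpha>))
       \<ge> ereal (2 * h - norm (x - xi (Gam Ms) x))"

text \<open>(2h - dist(y, A))_+ with dist(y,{}) = infinity\<close>
definition pospart_term :: "real \<Rightarrow> 'a::euclidean_space \<Rightarrow> 'a set \<Rightarrow> real" where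
  "pospart_term h y A = (if A = {} then 0 else max (2 * h - infdist y A) 0)"

definition Fmap where
  "Fmap f Ms L \<alpha> lam h = (\<lambda>(x, t).
     if \<exists>M. C1 f Ms L \<alpha> lam h M x then
       (let M = (THE M. C1 f Ms L \<alpha> lam h M x); y = xi (Gam Ms) x in
         (1 - t) *\<^sub>R x + t *\<^sub>R (y + (pospart_term h y (M \<inter> sublevel f (lam + L * h powr \<alpha>))
                 / norm (x - y)) *\<^sub>R (x - y)))
     else x)"

definition Gset where
  "Gset f Ms L \<alpha> lam h = (\<lambda>x. Fmap f Ms L \<alpha> lam h (x, 1)) ` Kset f Ms L \<alpha> lam h"

definition deformation_retraction ::
  "'a::topological_space set \<Rightarrow> 'a set \<Rightarrow> ('a \<times> real \<Rightarrow> 'a) \<Rightarrow> bool" where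
  "deformation_retraction X A F \<longleftrightarrow>
     A \<subseteq> X \<and> continuous_on (X \<times> {0..1}) F \<and> F ` (X \<times> {0..1}) \<subseteq> X \<and>
     (\<forall>x\<in>X. F (x, 0) = x \<and> F (x, 1) \<in> A) \<and> (\<forall>a\<in>A. F (a, 1) = a)"

end

theory Submission
  imports Defs
begin

text \<open>
  Points of the segments \<open>[z, \<xi> z]\<close> stay within \<open>h\<close> of \<open>\<Gamma>\<close> and keep their nearest point, which
  gives the inclusions between \<open>K\<close>, \<open>G\<close> and the thickened sublevel sets. The map \<open>F(\<cdot>, 1)\<close>
  slides a point satisfying (C1) along \<open>[\<xi> x, x]\<close>; it is continuous because \<open>\<xi>\<close> is continuous
  on the tube of radius \<open>R\<close> (positive reach) and because away from its fixed points (C1) is a strict,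
  hence open, inequality. It is idempotent since a retracted point satisfies (C1) with equality.

  For the bound on \<open>f\<close> over \<open>G\<close>: a retracted point lies within \<open>3h\<close> of \<open>M\<^sub>i \<inter> F\<^sub>\<lambda>\<^sub>+\<^sub>L\<^sub>h\<^sup>\<alpha>\<close> in
  the same piece, and the Holder estimate applies. Points that are not moved lie near \<open>F\<^sub>\<lambda>\<close>;
  lower semicontinuity (A2) carries the Holder estimate of a piece to its closure, and every piece
  within distance \<open>R\<close> of a point of \<open>\<Gamma>\<close> has that point in its closure. The latter holds because
  \<open>\<Gamma>\<close> is locally a regular level set, whose two sides are each contained in a single piece.
\<close>

lemma connected_subset_open_piece:
  assumes "connected S" "S \<subseteq> \<Union>\<M>" "\<And>M. M \<in> \<M> \<Longrightarrow> open M" "pairwise disjnt \<M>"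
    and "Q \<in> \<M>" "a \<in> S" "a \<in> Q"
  shows "S \<subseteq> Q"
proof -
  have "Q \<inter> \<Union>(\<M> - {Q}) = {}"
    using \<open>pairwise disjnt \<M>\<close> \<open>Q \<in> \<M>\<close> by (auto simp: pairwise_def disjnt_def)
  moreover have "S \<subseteq> Q \<union> \<Union>(\<M> - {Q})" using assms(2) by blast
  ultimately have "Q \<inter> S = {} \<or> \<Union>(\<M> - {Q}) \<inter> S = {}"
    using connectedD[OF \<open>connected S\<close>, of Q "\<Union>(\<M> - {Q})"] assms(3,5) by blast
  then show ?thesis using assms(6,7) \<open>S \<subseteq> Q \<union> \<Union>(\<M> - {Q})\<close> by blast
qed

lemma infdist_lessE:
  fixes x :: "'a::metric_space"
  assumes "A \<noteq> {}" "infdist x A < e"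
  obtains a where "a \<in> A" "dist x a < e"
  using assms cInf_lessD[of "dist x ` A" e] by (auto simp: infdist_notempty)

lemma dist_add_closed_segment:
  fixes a b :: "'a::euclidean_space"
  shows "x \<in> closed_segment a b \<Longrightarrow> dist a b = dist a x + dist x b"
  using between between_mem_segment by blast

lemma mvt_closed_segment:
  fixes g :: "'a::real_inner \<Rightarrow> real"
  assumes "closed_segment a b \<subseteq> U"
    and "\<And>x. x \<in> U \<Longrightarrow> (g has_derivative (\<lambda>v. gr x \<bullet> v)) (at x)"
  obtains z where "z \<in> closed_segment a b" "g b - g a = gr z \<bullet> (b - a)"
proof -
  define l where "l = (\<lambda>t::real. a + t *\<^sub>R (b - a))"
  have l_seg: "l t \<in> closed_segment a b" if "t \<in> {0..1}" for t
    using that unfolding l_def closed_segment_def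
    by (auto intro!: exI[of _ t] simp: algebra_simps)
  have "((\<lambda>t. g (l t)) has_derivative (\<lambda>s. gr (l t) \<bullet> (s *\<^sub>R (b - a)))) (at t within {0..1})"
    if "t \<in> {0..1}" for t
  proof -
    have "(l has_derivative (\<lambda>s. s *\<^sub>R (b - a))) (at t within {0..1})"
      unfolding l_def by (auto intro!: derivative_eq_intros)
    moreover have "(g has_derivative (\<lambda>v. gr (l t) \<bullet> v)) (at (l t))"
      using assms l_seg[OF that] by blast
    ultimately show ?thesis using has_derivative_compose by fastforce
  qed
  then obtain t where "t \<in> {0..1}" "g (l 1) - g (l 0) = gr (l t) \<bullet> ((1 - 0) *\<^sub>R (b - a))"
    using mvt_very_simple[of 0 1 "\<lambda>t. g (l t)" "\<lambda>t s. gr (l t) \<bullet> (s *\<^sub>R (b - a))"] by force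
  moreover have "l 0 = a" "l 1 = b" by (simp_all add: l_def)
  ultimately show ?thesis using that l_seg by auto
qed

lemma mem_thick_iff: "x \<in> thick A b \<longleftrightarrow> x \<in> cube \<and> A \<noteq> {} \<and> infdist x A \<le> b"
  by (cases "A = {}") (simp_all add: thick_def sdist_def)

lemma sdist_nonempty: "A \<noteq> {} \<Longrightarrow> sdist x A = ereal (infdist x A)"
  by (simp add: sdist_def)

lemma continuous_within_fixed_point:
  fixes \<Phi> :: "'a::metric_space \<Rightarrow> 'a"
  assumes "\<Phi> x = x" and "eventually (\<lambda>y. dist (\<Phi> y) y \<le> dist y x) (at x within K)"
  shows "continuous (at x within K) \<Phi>"
proof -
  have ev: "eventually (\<lambda>y. dist (\<Phi> y) x \<le> 2 * dist y x) (at x within K)"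
    using assms(2) by eventually_elim (metis dist_triangle order.trans add_right_mono mult_2)
  have "((\<lambda>y. 2 * dist y x) \<longlongrightarrow> 2 * dist x x) (at x within K)"
    by (intro tendsto_intros)
  then have lim: "((\<lambda>y. 2 * dist y x) \<longlongrightarrow> 0) (at x within K)" by simp
  have "((\<lambda>y. dist (\<Phi> y) x) \<longlongrightarrow> 0) (at x within K)"
    by (rule tendsto_sandwich[OF _ ev tendsto_const lim]) simp
  then show ?thesis using assms(1) tendsto_dist_iff[THEN iffD2] by (simp add: continuous_within)
qed

section \<open>Local normal charts of a \<open>C\<^sup>1\<^sup>,\<^sup>1\<close> hypersurface\<close>

definition normal_chart :: "'a::real_inner set \<Rightarrow> 'a \<Rightarrow> real \<Rightarrow> 'a \<Rightarrow> ('a \<Rightarrow> real) \<Rightarrow> bool" where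
  "normal_chart S p d n g \<longleftrightarrow> 0 < d \<and> norm n = 1 \<and> (\<forall>x\<in>ball p d. x \<in> S \<longleftrightarrow> g x = 0) \<and>
     (\<forall>x y t v \<sigma>. x \<in> ball p d \<longrightarrow> y \<in> ball p d \<longrightarrow> y = x + (\<sigma> * t) *\<^sub>R n + v \<longrightarrow> \<bar>\<sigma>\<bar> = 1 \<longrightarrow> 0 \<le> t \<longrightarrow>
        3/4 * t - 5/4 * norm v \<le> \<sigma> * (g y - g x))"

lemma normal_chartD:
  assumes "normal_chart S p d n g"
  shows "0 < d" "norm n = 1" "x \<in> ball p d \<Longrightarrow> x \<in> S \<longleftrightarrow> g x = 0"
    "\<lbrakk>x \<in> ball p d; y \<in> ball p d; y = x + (\<sigma> * t) *\<^sub>R n + v; \<bar>\<sigma>\<bar> = 1; 0 \<le> t\<rbrakk> \<Longrightarrow>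
      3/4 * t - 5/4 * norm v \<le> \<sigma> * (g y - g x)"
  using assms unfolding normal_chart_def by blast+

lemma gradient_growth:
  fixes g :: "'a::real_inner \<Rightarrow> real"
  assumes deriv: "\<And>z. z \<in> ball p d \<Longrightarrow> (g has_derivative (\<lambda>v. gr z \<bullet> v)) (at z)"
    and close: "\<And>z. z \<in> ball p d \<Longrightarrow> norm (gr z - gr p) \<le> norm (gr p) / 4"
    and n: "gr p = norm (gr p) *\<^sub>R n" "norm n = 1"
    and xy: "x \<in> ball p d" "y \<in> ball p d" "y = x + (\<sigma> * t) *\<^sub>R n + v"
    and \<sigma>: "\<bar>\<sigma>\<bar> = 1" and t: "0 \<le> t"
  shows "norm (gr p) * (3/4 * t - 5/4 * norm v) \<le> \<sigma> * (g y - g x)"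
proof -
  define m where "m = norm (gr p)"
  have "closed_segment x y \<subseteq> ball p d" using xy by (simp add: closed_segment_subset)
  then obtain z where "z \<in> closed_segment x y" and mvt: "g y - g x = gr z \<bullet> (y - x)"
    using mvt_closed_segment[of x y "ball p d" g gr] deriv by blast
  with \<open>closed_segment x y \<subseteq> ball p d\<close> have z: "z \<in> ball p d" by blast
  have "\<bar>(gr z - gr p) \<bullet> n\<bar> \<le> m / 4"
    using Cauchy_Schwarz_ineq2[of "gr z - gr p" n] close[OF z] n(2) by (simp add: m_def)
  moreover have "gr p \<bullet> n = m" using n by (metis inner_scaleR_left inner_commute norm_eq_1 mult.right_neutral m_def)
  ultimately have normal: "3/4 * m \<le> gr z \<bullet> n" using abs_le_D2 by (fastforce simp: inner_diff_left)
  have "\<bar>gr z \<bullet> v\<bar> \<le> norm (gr z) * norm v" by (rule Cauchy_Schwarz_ineq2)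
  also have "\<dots> \<le> 5/4 * m * norm v"
    using norm_triangle_sub[of "gr z" "gr p"] close[OF z] by (intro mult_right_mono) (auto simp: m_def)
  finally have tangential: "\<bar>\<sigma> * (gr z \<bullet> v)\<bar> \<le> 5/4 * m * norm v" using \<sigma> by (simp add: abs_mult)
  have "\<sigma> = 1 \<or> \<sigma> = -1" using \<sigma> by (auto simp: abs_if split: if_splits)
  then have "\<sigma> * (g y - g x) = t * (gr z \<bullet> n) + \<sigma> * (gr z \<bullet> v)"
    using mvt xy(3) by (auto simp: inner_add_right)
  moreover have "3/4 * m * t \<le> t * (gr z \<bullet> n)"
    using mult_right_mono[OF normal t] by (simp add: mult.commute)
  ultimately show ?thesis using tangential by (simp add: m_def algebra_simps abs_le_iff)
qed

lemma lipschitz_close_on_ball: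
  assumes "open U" "p \<in> U" "\<And>x y. x \<in> U \<Longrightarrow> y \<in> U \<Longrightarrow> norm (gr x - gr y) \<le> K * norm (x - y)"
    and "0 < c"
  shows "\<exists>d>0. ball p d \<subseteq> U \<and> (\<forall>z\<in>ball p d. norm (gr z - gr p) \<le> c)"
proof -
  define K1 where "K1 = max K 1"
  have K1: "1 \<le> K1" "K \<le> K1" by (auto simp: K1_def)
  obtain d0 where d0: "0 < d0" "ball p d0 \<subseteq> U" using assms(1,2) openE by blast
  define d where "d = min d0 (c / K1)"
  have "K1 * d \<le> K1 * (c / K1)" using K1 by (intro mult_left_mono) (auto simp: d_def)
  then have d: "0 < d" "ball p d \<subseteq> U" "K1 * d \<le> c"
    using d0 assms(4) K1 subset_ball[of d d0 p] by (auto simp: d_def)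
  show ?thesis
  proof (intro exI[of _ d] conjI ballI)
    show "0 < d" "ball p d \<subseteq> U" using d by simp_all
    fix z assume z: "z \<in> ball p d"
    have "norm (gr z - gr p) \<le> K * norm (z - p)" using assms(2,3) z d(2) by blast
    also have "\<dots> \<le> K1 * norm (z - p)" using K1 by (intro mult_right_mono) auto
    also have "\<dots> \<le> K1 * d" using z K1 by (intro mult_left_mono) (auto simp: dist_norm norm_minus_commute)
    finally show "norm (gr z - gr p) \<le> c" using d(3) by linarith
  qed
qed

lemma C11_hypersurface_local_normal:
  assumes "C11_hypersurface S" "p \<in> S" "open W" "p \<in> W"
  obtains d n g where "normal_chart S p d n g" "ball p d \<subseteq> W"
proof -
  obtain U g gr K where U: "open U" "p \<in> U"
    and dg: "\<forall>x\<in>U. (g has_derivative (\<lambda>v. gr x \<bullet> v)) (at x)"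
    and nz: "\<forall>x\<in>U. gr x \<noteq> 0"
    and lip: "\<forall>x\<in>U. \<forall>y\<in>U. norm (gr x - gr y) \<le> K * norm (x - y)"
    and SU: "S \<inter> U = {x\<in>U. g x = (0::real)}"
  proof -
    obtain U g gr K where "open U \<and> p \<in> U \<and>
        (\<forall>x\<in>U. (g has_derivative (\<lambda>v. gr x \<bullet> v)) (at x)) \<and> (\<forall>x\<in>U. gr x \<noteq> 0) \<and>
        (\<forall>x\<in>U. \<forall>y\<in>U. norm (gr x - gr y) \<le> K * norm (x - y)) \<and> S \<inter> U = {x\<in>U. g x = (0::real)}"
      using bspec[OF assms(1)[unfolded C11_hypersurface_def] assms(2)] by (elim exE)
    then show ?thesis using that by (elim conjE)
  qed
  define m where "m = norm (gr p)"
  define n where "n = (1 / m) *\<^sub>R gr p"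
  have m: "0 < m" using nz U(2) by (simp add: m_def)
  have n: "norm n = 1" "gr p = m *\<^sub>R n" using m by (simp_all add: n_def m_def)
  have "open (U \<inter> W)" "p \<in> U \<inter> W" using U assms(3,4) by auto
  moreover have "norm (gr x - gr y) \<le> K * norm (x - y)" if "x \<in> U \<inter> W" "y \<in> U \<inter> W" for x y
    using lip that by blast
  moreover have "0 < m / 4" using m by simp
  ultimately obtain d where d: "0 < d" "ball p d \<subseteq> U \<inter> W"
    and close: "\<forall>z\<in>ball p d. norm (gr z - gr p) \<le> m / 4"
    using lipschitz_close_on_ball by blast
  have deriv: "\<And>z. z \<in> ball p d \<Longrightarrow> (g has_derivative (\<lambda>v. gr z \<bullet> v)) (at z)"
    using dg d(2) by blast
  have "normal_chart S p d n (\<lambda>x. g x / m)"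
    unfolding normal_chart_def
  proof (intro conjI ballI allI impI)
    show "x \<in> S \<longleftrightarrow> g x / m = 0" if "x \<in> ball p d" for x
    proof -
      have "x \<in> U" using that d(2) by blast
      then have "x \<in> S \<longleftrightarrow> x \<in> {x\<in>U. g x = 0}" by (simp flip: SU)
      then show ?thesis using \<open>x \<in> U\<close> m by simp
    qed
    fix x y t v and \<sigma> :: real
    assume "x \<in> ball p d" "y \<in> ball p d" "y = x + (\<sigma> * t) *\<^sub>R n + v" "\<bar>\<sigma>\<bar> = 1" "0 \<le> t"
    from gradient_growth[OF deriv close[rule_format, unfolded m_def] n(2)[unfolded m_def] n(1) this]
    have "m * (3/4 * t - 5/4 * norm v) \<le> \<sigma> * (g y - g x)" by (simp only: m_def)
    then show "3/4 * t - 5/4 * norm v \<le> \<sigma> * (g y / m - g x / m)"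
      using m by (simp add: field_simps)
  qed (use d n in auto)
  moreover have "ball p d \<subseteq> W" using d(2) by blast
  ultimately show ?thesis by (rule that)
qed

lemma normal_chart_staple:
  assumes chart: "normal_chart S p (6 * r) n g" and p: "p \<in> S" and \<sigma>: "\<bar>\<sigma>\<bar> = 1"
    and b: "b \<in> ball p r" "0 < \<sigma> * g b"
    and x: "x \<in> closed_segment b (b + (4 * r * \<sigma>) *\<^sub>R n) \<union>
      closed_segment (b + (4 * r * \<sigma>) *\<^sub>R n) (p + (4 * r * \<sigma>) *\<^sub>R n)"
  shows "x \<in> ball p (6 * r) \<and> 0 < \<sigma> * g x"
proof -
  note n = normal_chartD(2)[OF chart] and cone = normal_chartD(4)[OF chart]
  have r: "0 < r" using normal_chartD(1)[OF chart] by simp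
  have "g p = 0" using normal_chartD(3)[OF chart, of p] p r by simp
  have pb: "p \<in> ball p (6 * r)" "b \<in> ball p (6 * r)" using b r by auto
  from x show ?thesis
  proof
    assume "x \<in> closed_segment b (b + (4 * r * \<sigma>) *\<^sub>R n)"
    then obtain u where u: "0 \<le> u" "u \<le> 1" "x = b + (\<sigma> * (4 * r * u)) *\<^sub>R n + 0"
      by (auto simp: closed_segment_def algebra_simps)
    have "dist p x \<le> dist p b + dist b x" by (rule dist_triangle)
    also have "dist b x = 4 * r * u" using u n \<sigma> r by (simp add: dist_norm abs_mult)
    finally have "dist p x \<le> dist p b + 4 * r * u" .
    moreover have "4 * r * u \<le> 4 * r" using u r by (simp add: mult_left_le)
    moreover have "dist p b < r" using b(1) by simp
    ultimately have "dist p x < 6 * r" using r by linarith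
    then have xb: "x \<in> ball p (6 * r)" by simp
    have "3/4 * (4 * r * u) \<le> \<sigma> * (g x - g b)"
      using cone[OF pb(2) xb u(3) \<sigma>] u r by simp
    moreover have "0 \<le> 4 * r * u" using u r by simp
    ultimately show ?thesis using xb b(2) by (simp add: algebra_simps)
  next
    assume "x \<in> closed_segment (b + (4 * r * \<sigma>) *\<^sub>R n) (p + (4 * r * \<sigma>) *\<^sub>R n)"
    then obtain u where u: "0 \<le> u" "u \<le> 1" "x = p + (\<sigma> * (4 * r)) *\<^sub>R n + (1 - u) *\<^sub>R (b - p)"
      by (auto simp: closed_segment_def algebra_simps)
    have v: "norm ((1 - u) *\<^sub>R (b - p)) < r"
      using b u mult_left_le_one_le[of "norm (b - p)" "1 - u"] by (simp add: dist_norm norm_minus_commute)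
    have "norm (x - p) \<le> norm ((\<sigma> * (4 * r)) *\<^sub>R n) + norm ((1 - u) *\<^sub>R (b - p))"
      using u(3) norm_triangle_ineq[of "(\<sigma> * (4 * r)) *\<^sub>R n" "(1 - u) *\<^sub>R (b - p)"] by simp
    then have xb: "x \<in> ball p (6 * r)" using v n \<sigma> r by (simp add: dist_norm norm_minus_commute abs_mult)
    have "3 * r - 5/4 * norm ((1 - u) *\<^sub>R (b - p)) \<le> \<sigma> * g x"
      using cone[OF pb(1) xb u(3) \<sigma>] r \<open>g p = 0\<close> by simp
    then show ?thesis using xb v r by simp
  qed
qed

section \<open>Nearest points in sets of positive reach\<close>

lemma reach_nearest:
  assumes "reach_ge S R" "S \<noteq> {}" "infdist x S < R"
  shows "xi S x \<in> S" "dist x (xi S x) = infdist x S"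
proof -
  have "\<exists>!y. y \<in> S \<and> dist x y = infdist x S"
    using assms unfolding reach_ge_def sdist_def by simp
  then have "xi S x \<in> S \<and> dist x (xi S x) = infdist x S"
    unfolding xi_def by (rule theI')
  then show "xi S x \<in> S" "dist x (xi S x) = infdist x S" by auto
qed

lemma reach_nearest_unique:
  assumes "reach_ge S R" "S \<noteq> {}" "infdist x S < R" "y \<in> S" "dist x y = infdist x S"
  shows "y = xi S x"
  using assms reach_nearest[OF assms(1-3)] unfolding reach_ge_def sdist_def by auto

lemma xi_of_mem:
  assumes "reach_ge S R" "0 < R" "y \<in> S"
  shows "xi S y = y"
proof -
  have ne: "S \<noteq> {}" using assms(3) by auto
  show ?thesis using reach_nearest_unique[OF assms(1) ne, of y y] assms by simp
qed

lemma xi_closed_segment: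
  fixes S :: "'a::euclidean_space set"
  assumes reach: "reach_ge S R" and "S \<noteq> {}" "infdist z S < R"
    and x: "x \<in> closed_segment z (xi S z)"
  shows "infdist x S = dist x (xi S z)" "infdist x S \<le> infdist z S" "xi S x = xi S z"
proof -
  note z = reach_nearest[OF reach \<open>S \<noteq> {}\<close> \<open>infdist z S < R\<close>]
  have split: "dist z (xi S z) = dist z x + dist x (xi S z)"
    using dist_add_closed_segment[OF x] .
  have "dist x (xi S z) \<le> dist x q" if "q \<in> S" for q
    using infdist_le[OF that, of z] dist_triangle[of z q x] z(2) split by linarith
  then have "dist x (xi S z) \<le> infdist x S"
    using \<open>S \<noteq> {}\<close> by (simp add: infdist_notempty cINF_greatest)
  then show eq: "infdist x S = dist x (xi S z)"
    using infdist_le[OF z(1), of x] by linarith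
  show le: "infdist x S \<le> infdist z S" using eq split z(2) by simp
  show "xi S x = xi S z"
    using reach_nearest_unique[OF reach \<open>S \<noteq> {}\<close> _ z(1)] eq le \<open>infdist z S < R\<close> by simp
qed

lemma open_infdist_less: "open {x. infdist x S < r}"
  by (intro open_Collect_less continuous_intros)

text \<open>Closed graph argument: on a bounded part of the tube the graph of \<open>xi S\<close> is the closed
  set \<open>{(x, y). y \<in> S, dist x y = infdist x S}\<close>, and its values lie in a compact set.\<close>

lemma continuous_on_xi_ball:
  assumes "closed S" and reach: "reach_ge S R" and "S \<noteq> {}"
  shows "continuous_on ({x. infdist x S < R} \<inter> ball x0 1) (xi S)"
proof -
  note near = reach_nearest[OF reach \<open>S \<noteq> {}\<close>]
  let ?B = "{x. infdist x S < R} \<inter> ball x0 1" and ?T = "S \<inter> cball x0 (R + 1)"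
  have cT: "compact ?T" using compact_Int_closed[OF compact_cball \<open>closed S\<close>] by (simp add: Int_commute)
  have maps: "xi S \<in> ?B \<rightarrow> ?T"
  proof
    fix x assume x: "x \<in> ?B"
    have "dist x0 (xi S x) \<le> dist x0 x + dist x (xi S x)" by (rule dist_triangle)
    then show "xi S x \<in> ?T" using x near[of x] by simp
  qed
  have graph: "(\<lambda>x. (x, xi S x)) ` ?B =
      (?B \<times> ?T) \<inter> (\<lambda>p. dist (fst p) (snd p) - infdist (fst p) S) -` {0}"
  proof (intro equalityI subsetI)
    fix p assume "p \<in> (\<lambda>x. (x, xi S x)) ` ?B"
    then show "p \<in> (?B \<times> ?T) \<inter> (\<lambda>p. dist (fst p) (snd p) - infdist (fst p) S) -` {0}"
      using maps near by auto
  next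
    fix p assume p: "p \<in> (?B \<times> ?T) \<inter> (\<lambda>p. dist (fst p) (snd p) - infdist (fst p) S) -` {0}"
    then have "snd p = xi S (fst p)"
      using reach_nearest_unique[OF reach \<open>S \<noteq> {}\<close>] by (auto simp: mem_Times_iff)
    then show "p \<in> (\<lambda>x. (x, xi S x)) ` ?B"
      using p by (auto simp: mem_Times_iff intro!: image_eqI[of _ _ "fst p"] prod_eqI)
  qed
  have "closedin (top_of_set (?B \<times> ?T))
      ((?B \<times> ?T) \<inter> (\<lambda>p. dist (fst p) (snd p) - infdist (fst p) S) -` {0})"
    by (intro continuous_closedin_preimage continuous_intros continuous_on_infdist closed_singleton)
  then show ?thesis using continuous_closed_graph_eq[OF cT maps] graph by simp
qed

lemma continuous_on_xi:
  assumes "closed S" and "reach_ge S R" and "S \<noteq> {}"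
  shows "continuous_on {x. infdist x S < R} (xi S)"
proof -
  let ?V = "{x. infdist x S < R}"
  have "continuous_on (\<Union>x0\<in>?V. ?V \<inter> ball x0 1) (xi S)"
    using continuous_on_xi_ball[OF assms] open_infdist_less by (intro continuous_on_open_UN) auto
  moreover have "(\<Union>x0\<in>?V. ?V \<inter> ball x0 1) = ?V" by auto
  ultimately show ?thesis by simp
qed

locale piecewise_holder =
  fixes f :: "'a::euclidean_space \<Rightarrow> real" and Ms :: "'a set set" and Mb L \<alpha> R :: real
  assumes in_S: "in_S f Ms Mb L \<alpha> R" and R_pos: "0 < R"
begin

abbreviation "\<Gamma> \<equiv> Gam Ms"
abbreviation "\<xi> \<equiv> xi \<Gamma>"

lemma alpha_pos: "0 < \<alpha>"
  using in_S by (simp add: in_S_def)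

lemma open_piece: "M \<in> Ms \<Longrightarrow> open M"
  using in_S by (simp add: in_S_def)

lemma piece_subset_cube: "M \<in> Ms \<Longrightarrow> M \<subseteq> cube"
  using in_S by (simp add: in_S_def)

lemma pieces_disjoint: "pairwise disjnt Ms"
  using in_S by (auto simp: in_S_def pairwise_def disjnt_def)

lemma piece_unique: "M \<in> Ms \<Longrightarrow> M' \<in> Ms \<Longrightarrow> x \<in> M \<Longrightarrow> x \<in> M' \<Longrightarrow> M = M'"
  using pieces_disjoint by (metis disjnt_iff pairwiseD)

lemma closure_pieces: "(\<Union>M\<in>Ms. closure M) = cube"
  using in_S by (simp add: in_S_def)

lemma holder:
  assumes "M \<in> Ms" "x \<in> M" "y \<in> M"
  shows "f x \<le> f y + L * norm (x - y) powr \<alpha>"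
proof -
  have "\<bar>f x - f y\<bar> \<le> L * norm (x - y) powr \<alpha>" using in_S assms unfolding in_S_def by blast
  then show ?thesis by linarith
qed

lemma Liminf_f: "x \<in> cube \<Longrightarrow> Liminf (at x within \<Union>Ms) (\<lambda>y. ereal (f y)) = ereal (f x)"
  using in_S by (simp add: in_S_def)

lemma reach_Gamma: "reach_ge \<Gamma> R"
  using in_S by (simp add: in_S_def)

lemma Gamma_far_from_frontier:
  assumes "y \<in> \<Gamma>" "x \<in> frontier cube"
  shows "R \<le> dist y x"
proof -
  have "R \<le> infdist y (frontier cube)" using in_S assms(1) unfolding in_S_def by blast
  then show ?thesis using infdist_le[OF assms(2), of y] by linarith
qed

lemma eventually_in_piece: "M \<in> Ms \<Longrightarrow> x \<in> M \<Longrightarrow> eventually (\<lambda>y. y \<in> M) (at x)"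
  using open_piece eventually_at_topological by blast

lemma piece_subset_box: "M \<in> Ms \<Longrightarrow> M \<subseteq> box 0 One"
  using interior_maximal[OF piece_subset_cube open_piece] by (simp add: interior_cbox)

lemma Gamma_subset_box: "\<Gamma> \<subseteq> box 0 One"
  by (auto simp: Gam_def)

lemma piece_disjoint_Gamma:
  assumes M: "M \<in> Ms" and x: "x \<in> M"
  shows "x \<notin> \<Gamma>"
proof
  assume "x \<in> \<Gamma>"
  then obtain M' where M': "M' \<in> Ms" "x \<in> frontier M'" "x \<in> M" using x by (auto simp: Gam_def)
  show False
  proof (cases "M = M'")
    case True then show False using M' open_piece[OF M] by (simp add: frontier_def interior_open)
  next
    case False
    then have "M \<inter> M' = {}" using piece_unique M M' by blast
    then have "M \<inter> closure M' = {}" using open_Int_closure_eq_empty open_piece[OF M] by blast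
    then show False using M' by (auto simp: frontier_def)
  qed
qed

lemma box_minus_Gamma_subset_pieces: "box 0 One - \<Gamma> \<subseteq> \<Union>Ms"
proof
  fix x assume x: "x \<in> box 0 One - \<Gamma>"
  then obtain M where M: "M \<in> Ms" "x \<in> closure M"
    using closure_pieces box_subset_cbox by blast
  then have "x \<in> M \<or> x \<in> frontier M" by (auto simp: frontier_def interior_open open_piece)
  then show "x \<in> \<Union>Ms" using x M(1) by (auto simp: Gam_def)
qed

lemma L_nonneg: "0 \<le> L"
proof -
  obtain M where M: "M \<in> Ms" "0 \<in> closure M"
    using closure_pieces by (force simp: mem_box)
  then obtain a where "a \<in> M" by (metis closure_empty empty_iff equals0I)
  then obtain e where a: "a \<in> M" "0 < e" "ball a e \<subseteq> M"
    using open_piece[OF M(1)] openE by blast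
  obtain v :: 'a where v: "norm v = e/2"
    using vector_choose_size[of "e/2"] a(2) by auto
  have "a + v \<in> M" using a v by (auto simp: dist_norm)
  then have "0 \<le> L * norm v powr \<alpha>"
    using holder[OF M(1) a(1), of "a + v"] holder[OF M(1) _ a(1), of "a + v"] by simp
  then show ?thesis using v a(2) by (simp add: zero_le_mult_iff)
qed

lemma closed_Gamma: "closed \<Gamma>"
proof -
  have "finite Ms" using in_S by (simp add: in_S_def)
  then have cl: "closed (\<Union>M\<in>Ms. frontier M)" by (intro closed_UN) auto
  have "x \<in> \<Gamma>" if x: "x \<in> closure \<Gamma>" for x
  proof (rule ccontr)
    assume "x \<notin> \<Gamma>"
    have "x \<in> (\<Union>M\<in>Ms. frontier M)"
      using closure_mono[of \<Gamma> "\<Union>M\<in>Ms. frontier M"] closure_closed[OF cl] x by (auto simp: Gam_def)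
    moreover have "frontier M \<subseteq> cube" if "M \<in> Ms" for M
      using piece_subset_cube[OF that] closure_minimal[of M cube]
      by (auto simp: frontier_def)
    ultimately have "x \<in> frontier cube"
      using \<open>x \<notin> \<Gamma>\<close> by (auto simp: Gam_def frontier_cbox)
    moreover obtain y where "y \<in> \<Gamma>" "dist y x < R"
      using x R_pos closure_approachable[of x \<Gamma>] by blast
    ultimately show False using Gamma_far_from_frontier[of y x] by simp
  qed
  then show ?thesis using closure_subset_eq by blast
qed

lemmas nearest_Gamma = reach_nearest[OF reach_Gamma]
lemmas xi_Gamma = xi_of_mem[OF reach_Gamma R_pos]
lemmas xi_Gamma_closed_segment = xi_closed_segment[OF reach_Gamma]
lemmas continuous_on_xi_Gamma = continuous_on_xi[OF closed_Gamma reach_Gamma]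

lemma near_Gamma_in_box:
  assumes "x \<in> cube" "\<Gamma> \<noteq> {}" "infdist x \<Gamma> < R"
  shows "x \<in> box 0 One"
proof (rule ccontr)
  assume "x \<notin> box 0 One"
  then have "x \<in> frontier cube" using assms(1) by (simp add: frontier_cbox)
  moreover obtain y where "y \<in> \<Gamma>" "dist x y < R" using infdist_lessE[OF assms(2,3)] by blast
  ultimately show False using Gamma_far_from_frontier[of y x] by (simp add: dist_commute)
qed

lemma open_segment_subset_piece:
  assumes Q: "Q \<in> Ms" "q \<in> Q" and y: "y \<in> cube" and avoid: "open_segment q y \<inter> \<Gamma> = {}"
  shows "open_segment q y \<subseteq> Q"
proof -
  have q: "q \<in> box 0 One" "q \<notin> \<Gamma>" using Q piece_subset_box piece_disjoint_Gamma by blast+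
  have "open_segment q y \<subseteq> box 0 One"
    using in_interior_closure_convex_segment[of cube q y] q y by (simp add: interior_cbox)
  then have "insert q (open_segment q y) \<subseteq> \<Union>Ms"
    using q avoid box_minus_Gamma_subset_pieces by blast
  moreover have "connected (insert q (open_segment q y))"
  proof (cases "q = y")
    case False
    have "connected (open_segment q y)" by (simp add: convex_connected)
    moreover have "insert q (open_segment q y) \<subseteq> closure (open_segment q y)"
      using False segment_open_subset_closed by auto
    ultimately show ?thesis
      using connected_intermediate_closure[of _ "insert q (open_segment q y)"] by blast
  qed simp
  ultimately have "insert q (open_segment q y) \<subseteq> Q"
    using connected_subset_open_piece[OF _ _ open_piece pieces_disjoint Q(1) _ Q(2)] by blast
  then show ?thesis by blast
qed

lemma closure_piece_of_segment:
  assumes "Q \<in> Ms" "q \<in> Q" "y \<in> cube" "open_segment q y \<inter> \<Gamma> = {}"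
  shows "y \<in> closure Q"
proof (cases "q = y")
  case False
  then have "y \<in> closure (open_segment q y)" by simp
  then show ?thesis using closure_mono[OF open_segment_subset_piece[OF assms]] by blast
qed (use assms closure_subset in blast)

lemma closure_piece_of_near_point:
  assumes Q: "Q \<in> Ms" "q \<in> Q" and y: "y \<in> cube" and far: "\<And>s. s \<in> \<Gamma> \<Longrightarrow> dist q y < dist s y"
  shows "y \<in> closure Q"
proof (rule closure_piece_of_segment[OF Q y])
  have "dist s y \<le> dist q y" if "s \<in> open_segment q y" for s
    using that segment_open_subset_closed dist_in_closed_segment[of s q y] by blast
  then show "open_segment q y \<inter> \<Gamma> = {}" using far by fastforce
qed

lemma closed_segment_xi_subset_piece:
  assumes M: "M \<in> Ms" "x \<in> M" and ne: "\<Gamma> \<noteq> {}" and xR: "infdist x \<Gamma> < R"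
    and y: "y \<in> closed_segment x (\<xi> x)" "y \<noteq> \<xi> x"
  shows "y \<in> M"
proof -
  have "w \<notin> \<Gamma>" if w: "w \<in> open_segment x (\<xi> x)" for w
  proof
    assume "w \<in> \<Gamma>"
    then have "dist w (\<xi> x) = 0"
      using w xi_Gamma_closed_segment(1)[OF ne xR, of w] by (simp add: open_segment_def)
    then show False using w by (simp add: open_segment_def)
  qed
  moreover have "\<xi> x \<in> cube"
    using nearest_Gamma(1)[OF ne xR] Gamma_subset_box box_subset_cbox by blast
  ultimately have "open_segment x (\<xi> x) \<subseteq> M"
    using open_segment_subset_piece[OF M] by blast
  then show ?thesis using y M(2) by (cases "y = x") (auto simp: open_segment_def)
qed

text \<open>\<open>\<sigma> g\<close> stays positive along the staple, so the staple avoids \<open>\<Gamma>\<close> and, being connected, lies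
  in a single piece.\<close>

lemma staple_same_piece:
  assumes chart: "normal_chart \<Gamma> p (6 * r) n g" and box: "ball p (6 * r) \<subseteq> box 0 One"
    and p: "p \<in> \<Gamma>" and Q: "Q \<in> Ms" and \<sigma>: "\<bar>\<sigma>\<bar> = 1" and b: "b \<in> ball p r" "0 < \<sigma> * g b"
  shows "b \<in> Q \<longleftrightarrow> p + (4 * r * \<sigma>) *\<^sub>R n \<in> Q"
proof -
  define P where "P = closed_segment b (b + (4 * r * \<sigma>) *\<^sub>R n) \<union>
    closed_segment (b + (4 * r * \<sigma>) *\<^sub>R n) (p + (4 * r * \<sigma>) *\<^sub>R n)"
  have "x \<in> \<Union>Ms" if "x \<in> P" for x
  proof -
    have "x \<in> ball p (6 * r) \<and> 0 < \<sigma> * g x"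
      using normal_chart_staple[OF chart p \<sigma> b] that unfolding P_def .
    then have "x \<in> ball p (6 * r)" "g x \<noteq> 0" by auto
    then show ?thesis using normal_chartD(3)[OF chart] box box_minus_Gamma_subset_pieces by blast
  qed
  moreover have "connected P" unfolding P_def by (intro connected_Un) auto
  ultimately have "P \<subseteq> Q" if "x \<in> P" "x \<in> Q" for x
    using connected_subset_open_piece[OF _ _ open_piece pieces_disjoint Q that] by blast
  moreover have "b \<in> P" "p + (4 * r * \<sigma>) *\<^sub>R n \<in> P" unfolding P_def using ends_in_segment by blast+
  ultimately show ?thesis by blast
qed

text \<open>A piece meeting the ball lies on one side \<open>\<sigma>\<close> of the zero set of \<open>g\<close>; it contains the points
  \<open>c + s\<sigma> n\<close>, which approximate any \<open>c \<in> \<Gamma>\<close> near \<open>p\<close>.\<close>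

lemma Gamma_locally_in_closure:
  assumes p: "p \<in> \<Gamma>"
  obtains r where "0 < r" "\<And>Q. Q \<in> Ms \<Longrightarrow> Q \<inter> ball p r \<noteq> {} \<Longrightarrow> \<Gamma> \<inter> ball p r \<subseteq> closure Q"
proof -
  have "C11_hypersurface \<Gamma>" using in_S by (simp add: in_S_def)
  moreover have "p \<in> box 0 One" using p Gamma_subset_box by blast
  ultimately obtain d n g where chart: "normal_chart \<Gamma> p d n g" and box: "ball p d \<subseteq> box 0 One"
    using C11_hypersurface_local_normal p open_box by metis
  define r where "r = d / 6"
  have d: "d = 6 * r" and r: "0 < r" using normal_chartD(1)[OF chart] by (simp_all add: r_def)
  note chart = chart[unfolded d] and box = box[unfolded d]
  have sub: "ball p r \<subseteq> ball p (6 * r)" using r by (intro subset_ball) simp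
  show ?thesis
  proof (rule that[OF r])
    fix Q assume Q: "Q \<in> Ms" "Q \<inter> ball p r \<noteq> {}"
    then obtain a where a: "a \<in> Q" "a \<in> ball p r" by blast
    have "g a \<noteq> 0"
      using piece_disjoint_Gamma[OF Q(1) a(1)] normal_chartD(3)[OF chart, of a] a(2) sub by blast
    define \<sigma> :: real where "\<sigma> = sgn (g a)"
    have \<sigma>: "\<bar>\<sigma>\<bar> = 1" "0 < \<sigma> * g a" using \<open>g a \<noteq> 0\<close> by (auto simp: \<sigma>_def sgn_if)
    have apex: "p + (4 * r * \<sigma>) *\<^sub>R n \<in> Q"
      using staple_same_piece[OF chart box p Q(1) \<sigma>(1) a(2) \<sigma>(2)] a(1) by blast
    show "\<Gamma> \<inter> ball p r \<subseteq> closure Q"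
    proof
      fix c assume c: "c \<in> \<Gamma> \<inter> ball p r"
      have gc: "g c = 0" using normal_chartD(3)[OF chart, of c] c sub by blast
      show "c \<in> closure Q"
        unfolding closure_approachable
      proof (intro allI impI)
        fix e :: real assume "0 < e"
        define s where "s = min (e / 2) ((r - dist p c) / 2)"
        have s: "0 < s" "s < e" "s < r - dist p c" using \<open>0 < e\<close> c by (auto simp: s_def min_def)
        define y where "y = c + (\<sigma> * s) *\<^sub>R n + 0"
        have dyc: "dist y c = s"
          using s normal_chartD(2)[OF chart] \<sigma> by (simp add: y_def dist_norm abs_mult)
        then have y: "y \<in> ball p r" using s dist_triangle[of p y c] by (simp add: dist_commute)
        have "c \<in> ball p (6 * r)" "y \<in> ball p (6 * r)" using c y sub by blast+
        then have "3/4 * s \<le> \<sigma> * (g y - g c)"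
          using normal_chartD(4)[OF chart _ _ y_def \<sigma>(1)] s by simp
        then have "0 < \<sigma> * g y" using s gc by simp
        then have "y \<in> Q" using staple_same_piece[OF chart box p Q(1) \<sigma>(1) y] apex by blast
        then show "\<exists>y\<in>Q. dist y c < e" using dyc s by auto
      qed
    qed
  qed
qed

lemma openin_Gamma_closure_piece:
  assumes Q: "Q \<in> Ms"
  shows "openin (top_of_set \<Gamma>) (\<Gamma> \<inter> closure Q)"
  unfolding openin_euclidean_subtopology_iff
proof (intro conjI ballI)
  fix c assume c: "c \<in> \<Gamma> \<inter> closure Q"
  obtain r where r: "0 < r" "\<And>Q. Q \<in> Ms \<Longrightarrow> Q \<inter> ball c r \<noteq> {} \<Longrightarrow> \<Gamma> \<inter> ball c r \<subseteq> closure Q"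
    using Gamma_locally_in_closure c by blast
  obtain x where "x \<in> Q" "dist x c < r" using c r(1) closure_approachable[of c Q] by blast
  then have "Q \<inter> ball c r \<noteq> {}" by (auto simp: dist_commute)
  then have "\<Gamma> \<inter> ball c r \<subseteq> closure Q" using r(2) Q by blast
  then show "\<exists>e>0. \<forall>x'\<in>\<Gamma>. dist x' c < e \<longrightarrow> x' \<in> \<Gamma> \<inter> closure Q"
    using r(1) by (intro exI[of _ r]) (auto simp: dist_commute)
qed auto

lemma xi_in_closure_piece:
  assumes Q: "Q \<in> Ms" "q \<in> Q" and ne: "\<Gamma> \<noteq> {}" and qR: "infdist q \<Gamma> < R"
  shows "\<xi> q \<in> closure Q"
proof -
  have "\<xi> q \<noteq> q" using nearest_Gamma(1)[OF ne qR] piece_disjoint_Gamma[OF Q] by metis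
  then have "\<xi> q \<in> closure (open_segment q (\<xi> q))" by simp
  moreover have "open_segment q (\<xi> q) \<subseteq> Q"
    using closed_segment_xi_subset_piece[OF Q ne qR] by (auto simp: open_segment_def)
  ultimately show ?thesis using closure_mono by blast
qed

lemma connected_subset_Gamma_closure_piece:
  assumes "connected C" "C \<subseteq> \<Gamma>" "Q \<in> Ms" "p \<in> C" "p \<in> closure Q"
  shows "C \<subseteq> closure Q"
proof -
  obtain V where "open V" "\<Gamma> \<inter> closure Q = \<Gamma> \<inter> V"
    using openin_Gamma_closure_piece[OF assms(3)] by (auto simp: openin_open)
  moreover from this(2) have "C \<inter> closure Q = C \<inter> V" using assms(2) by blast
  ultimately have "openin (top_of_set C) (C \<inter> closure Q)" by (simp add: openin_open_Int)
  moreover have "closedin (top_of_set C) (C \<inter> closure Q)" by (simp add: closedin_closed_Int)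
  ultimately have "C \<inter> closure Q = {} \<or> C \<inter> closure Q = C"
    using \<open>connected C\<close> unfolding connected_clopen by blast
  then show ?thesis using assms(4,5) by blast
qed

lemma Gamma_in_closure_of_near_piece:
  assumes y: "y \<in> \<Gamma>" and Q: "Q \<in> Ms" "q \<in> Q" and qy: "dist q y < R"
  shows "y \<in> closure Q"
proof -
  have ne: "\<Gamma> \<noteq> {}" using y by auto
  have qR: "infdist q \<Gamma> < R" using infdist_le[OF y, of q] qy by linarith
  define p where "p = \<xi> q"
  have p: "p \<in> \<Gamma>" "dist q p \<le> dist q y"
    using nearest_Gamma[OF ne qR] infdist_le[OF y, of q] by (auto simp: p_def)
  have tube: "closed_segment p y \<subseteq> {x. infdist x \<Gamma> < R}"
  proof
    fix s assume s: "s \<in> closed_segment p y"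
    have "dist s p + dist s y = dist p y"
      using dist_add_closed_segment[OF s] by (simp add: dist_commute)
    moreover have "dist p y < 2 * R" using p(2) qy dist_triangle[of p y q] by (simp add: dist_commute)
    ultimately show "s \<in> {x. infdist x \<Gamma> < R}"
      using infdist_le[OF p(1), of s] infdist_le[OF y, of s] by auto
  qed
  define C where "C = \<xi> ` closed_segment p y"
  have "\<xi> p \<in> C" "\<xi> y \<in> C" by (simp_all add: C_def)
  then have pC: "p \<in> C" and yC: "y \<in> C" using xi_Gamma[OF p(1)] xi_Gamma[OF y] by simp_all
  have "connected C"
    unfolding C_def
    by (rule connected_continuous_image[OF continuous_on_subset[OF continuous_on_xi_Gamma[OF ne] tube]])
      simp
  moreover have "C \<subseteq> \<Gamma>" using tube nearest_Gamma(1)[OF ne] by (auto simp: C_def)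
  moreover have "p \<in> closure Q" using xi_in_closure_piece[OF Q ne qR] by (simp add: p_def)
  ultimately show ?thesis using connected_subset_Gamma_closure_piece[OF _ _ Q(1) pC] yC by blast
qed

lemma L_powr_mono: "0 \<le> a \<Longrightarrow> a \<le> b \<Longrightarrow> L * a powr \<alpha> \<le> L * b powr \<alpha>"
  using L_nonneg alpha_pos by (intro mult_left_mono powr_mono2) auto

text \<open>Lower semicontinuity (A2) transfers the Holder bound of a piece to its closure.\<close>

lemma holder_closure_piece:
  assumes Q: "Q \<in> Ms" "q \<in> Q" and y: "y \<in> closure Q" "y \<in> cube"
  shows "f y \<le> f q + L * norm (y - q) powr \<alpha>"
proof (cases "y \<in> Q")
  case True then show ?thesis using holder[OF Q(1) _ Q(2)] by simp
next
  case False
  define \<phi> where "\<phi> x = f q + L * norm (x - q) powr \<alpha>" for x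
  show ?thesis
  proof (rule ccontr)
    assume "\<not> ?thesis"
    then have less: "\<phi> y < (\<phi> y + f y) / 2" "(\<phi> y + f y) / 2 < f y" by (simp_all add: \<phi>_def)
    have nontrivial: "at y within Q \<noteq> bot"
      using y(1) False by (simp add: trivial_limit_within closure_def)
    have "eventually (\<lambda>x. (\<phi> y + f y) / 2 < f x) (at y within Q)"
    proof -
      have "ereal (f y) \<le> Liminf (at y within \<Union>Ms) (\<lambda>x. ereal (f x))" using Liminf_f[OF y(2)] by simp
      from le_Liminf_iff[THEN iffD1, rule_format, OF this, of "ereal ((\<phi> y + f y) / 2)"] less(2)
      have "eventually (\<lambda>x. (\<phi> y + f y) / 2 < f x) (at y within \<Union>Ms)" by simp
      then show ?thesis using Q(1) by (auto intro: filter_leD[OF at_le])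
    qed
    moreover have "eventually (\<lambda>x. \<phi> x < (\<phi> y + f y) / 2) (at y within Q)"
    proof -
      have "(\<phi> \<longlongrightarrow> \<phi> y) (at y within Q)"
        using False Q(2) unfolding \<phi>_def by (intro tendsto_intros) auto
      then show ?thesis using less(1) by (rule order_tendstoD)
    qed
    moreover have "eventually (\<lambda>x. x \<in> Q) (at y within Q)" by (simp add: eventually_at_filter)
    ultimately have "eventually (\<lambda>x. False) (at y within Q)"
      by eventually_elim (use holder[OF Q(1) _ Q(2)] \<phi>_def in fastforce)
    with nontrivial show False by simp
  qed
qed

lemma exists_piece_point_close:
  assumes w: "w \<in> cube" and e: "0 < e"
  obtains q where "q \<in> \<Union>Ms" "dist q w < e" "f q < f w + e"
proof (rule ccontr)
  assume "\<not> thesis"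
  then have "eventually (\<lambda>x. ereal (f w + e) \<le> ereal (f x)) (at w within \<Union>Ms)"
    using that e unfolding eventually_at by (intro exI[of _ e]) force
  then have "ereal (f w + e) \<le> Liminf (at w within \<Union>Ms) (\<lambda>x. ereal (f x))"
    by (rule Liminf_bounded)
  then show False using Liminf_f[OF w] e by simp
qed

text \<open>The closure hypothesis lets the Holder bound of every nearby piece reach \<open>y\<close>; the slack \<open>e\<close>
  in approximating \<open>sublevel f lam\<close> by points of the pieces then tends to \<open>0\<close>.\<close>

lemma le_of_near_sublevel:
  assumes y: "y \<in> thick (sublevel f lam) \<rho>" and \<rho>: "0 < \<rho>" and e0: "0 < e0"
    and closure: "\<And>Q q. Q \<in> Ms \<Longrightarrow> q \<in> Q \<Longrightarrow> dist q y < \<rho> + e0 \<Longrightarrow> y \<in> closure Q"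
  shows "f y \<le> lam + L * \<rho> powr \<alpha>"
proof -
  have yc: "y \<in> cube" and ne: "sublevel f lam \<noteq> {}" and yF: "infdist y (sublevel f lam) \<le> \<rho>"
    using y by (simp_all add: mem_thick_iff)
  have bound: "f y \<le> lam + e + L * (\<rho> + 2 * e) powr \<alpha>" if e: "0 < e" "e < e0 / 2" for e
  proof -
    obtain w where w: "w \<in> sublevel f lam" "dist y w < \<rho> + e"
      using infdist_lessE[OF ne, of y "\<rho> + e"] yF e by auto
    then have wc: "w \<in> cube" and fw: "f w \<le> lam" by (auto simp: sublevel_def)
    obtain q where q: "q \<in> \<Union>Ms" "dist q w < e" "f q < f w + e"
      by (rule exists_piece_point_close[OF wc e(1)])
    then obtain Q where Q: "Q \<in> Ms" "q \<in> Q" by blast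
    have dqy: "dist q y < \<rho> + 2 * e" using q(2) w(2) dist_triangle[of q y w] by (simp add: dist_commute)
    then have "f y \<le> f q + L * norm (y - q) powr \<alpha>"
      using holder_closure_piece[OF Q closure[OF Q] yc] e by simp
    also have "\<dots> \<le> f q + L * (\<rho> + 2 * e) powr \<alpha>"
      using dqy by (intro add_left_mono L_powr_mono) (auto simp: dist_norm norm_minus_commute)
    finally show ?thesis using q(3) fw by simp
  qed
  have "((\<lambda>e. lam + e + L * (\<rho> + 2 * e) powr \<alpha>) \<longlongrightarrow> lam + 0 + L * (\<rho> + 2 * 0) powr \<alpha>) (at_right 0)"
    using \<rho> by (intro tendsto_intros) auto
  moreover have "eventually (\<lambda>e. f y \<le> lam + e + L * (\<rho> + 2 * e) powr \<alpha>) (at_right 0)"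
    unfolding eventually_at_right_field using e0 bound by (intro exI[of _ "e0 / 2"]) auto
  ultimately show ?thesis
    using tendsto_le[OF trivial_limit_at_right_real _ tendsto_const] by fastforce
qed

end

section \<open>The deformation retraction\<close>

locale sublevel_retraction = piecewise_holder f Ms Mb L \<alpha> R
  for f :: "'a::euclidean_space \<Rightarrow> real" and Ms Mb L \<alpha> R +
  fixes h lam :: real
  assumes h_pos: "0 < h" and h_less: "h < R / 2"
begin

abbreviation "Flam \<equiv> sublevel f lam"
abbreviation "Fup \<equiv> sublevel f (lam + L * h powr \<alpha>)"
abbreviation "Sh \<equiv> Sset f Ms L \<alpha> lam h"
abbreviation "Segs \<equiv> segs f Ms L \<alpha> lam h"
abbreviation "Kh \<equiv> Kset f Ms L \<alpha> lam h"
abbreviation "Gh \<equiv> Gset f Ms L \<alpha> lam h"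
abbreviation "Fh \<equiv> Fmap f Ms L \<alpha> lam h"
abbreviation "C1h \<equiv> C1 f Ms L \<alpha> lam h"
abbreviation "Phi x \<equiv> Fh (x, 1)"

text \<open>For \<open>x\<close> satisfying (C1) with piece \<open>M\<close>, \<open>Phi x\<close> is the point of the segment
  \<open>[\<xi> x, x]\<close> at distance \<open>retract_dist M x\<close> from \<open>\<xi> x\<close>; (C1) itself says \<open>2 * h \<le> C1_gauge M x\<close>.\<close>

definition retract_dist :: "'a set \<Rightarrow> 'a \<Rightarrow> real" where
  "retract_dist M x = pospart_term h (\<xi> x) (M \<inter> Fup)"

definition retract :: "'a set \<Rightarrow> 'a \<Rightarrow> 'a" where
  "retract M x = \<xi> x + (retract_dist M x / norm (x - \<xi> x)) *\<^sub>R (x - \<xi> x)"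

definition C1_gauge :: "'a set \<Rightarrow> 'a \<Rightarrow> real" where
  "C1_gauge M x = infdist (\<xi> x) (M \<inter> Fup) + dist x (\<xi> x)"

lemma mem_Sh:
  "z \<in> Sh \<longleftrightarrow> z \<in> cube \<and> \<Gamma> \<noteq> {} \<and> infdist z \<Gamma> \<le> h \<and> z \<notin> Fup \<and> Flam \<noteq> {} \<and> infdist z Flam \<le> h"
  by (auto simp: Sset_def mem_thick_iff)

lemma SegsE:
  assumes "x \<in> Segs"
  obtains z where "z \<in> Sh" "x \<in> closed_segment z (\<xi> z)"
  using assms by (auto simp: segs_def)

lemma Segs_nearest:
  assumes "x \<in> Segs"
  shows "\<Gamma> \<noteq> {}" "infdist x \<Gamma> \<le> h" "infdist x \<Gamma> < R" "\<xi> x \<in> \<Gamma>" "dist x (\<xi> x) = infdist x \<Gamma>"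
proof -
  obtain z where z: "z \<in> Sh" "x \<in> closed_segment z (\<xi> z)" using assms by (rule SegsE)
  then show ne: "\<Gamma> \<noteq> {}" by (simp add: mem_Sh)
  have "infdist z \<Gamma> < R" using z(1) h_pos h_less by (simp add: mem_Sh)
  then show "infdist x \<Gamma> \<le> h"
    using xi_Gamma_closed_segment(2)[OF ne _ z(2)] z(1) by (simp add: mem_Sh)
  then show xR: "infdist x \<Gamma> < R" using h_pos h_less by linarith
  show "\<xi> x \<in> \<Gamma>" "dist x (\<xi> x) = infdist x \<Gamma>" using nearest_Gamma[OF ne xR] by auto
qed

lemma closed_segment_xi_subset_Segs:
  assumes "x \<in> Segs"
  shows "closed_segment x (\<xi> x) \<subseteq> Segs"
proof -
  obtain z where z: "z \<in> Sh" "x \<in> closed_segment z (\<xi> z)" using assms by (rule SegsE)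
  have "infdist z \<Gamma> < R" using z(1) h_pos h_less by (simp add: mem_Sh)
  then have "\<xi> x = \<xi> z" using xi_Gamma_closed_segment(3)[OF _ _ z(2)] z(1) by (simp add: mem_Sh)
  then have "closed_segment x (\<xi> x) \<subseteq> closed_segment z (\<xi> z)"
    using z(2) by (simp add: subset_closed_segment)
  then show ?thesis using z(1) by (auto simp: segs_def)
qed

lemma Segs_subset_box: "x \<in> Segs \<Longrightarrow> x \<in> box 0 One"
proof -
  assume x: "x \<in> Segs"
  obtain z where z: "z \<in> Sh" "x \<in> closed_segment z (\<xi> z)" using x by (rule SegsE)
  have zR: "infdist z \<Gamma> < R" and ne: "\<Gamma> \<noteq> {}" and "z \<in> cube"
    using z(1) h_pos h_less by (auto simp: mem_Sh)
  then have "z \<in> box 0 One" using near_Gamma_in_box by blast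
  moreover have "\<xi> z \<in> box 0 One" using nearest_Gamma(1)[OF ne zR] Gamma_subset_box by blast
  ultimately show ?thesis using z(2) closed_segment_subset[OF _ _ convex_box(2)] by blast
qed

lemma Kh_subset_thick: "Kh \<subseteq> thick Flam (2 * h)"
proof
  fix x assume "x \<in> Kh"
  then consider "x \<in> thick Flam h" | "x \<in> Segs" by (auto simp: Kset_def)
  then show "x \<in> thick Flam (2 * h)"
  proof cases
    case 1 then show ?thesis using h_pos by (auto simp: mem_thick_iff)
  next
    case 2
    obtain z where z: "z \<in> Sh" "x \<in> closed_segment z (\<xi> z)" using 2 by (rule SegsE)
    have "dist z x \<le> dist z (\<xi> z)" using dist_add_closed_segment[OF z(2)] by simp
    also have "\<dots> \<le> h"
      using z(1) h_pos h_less nearest_Gamma(2)[of z] by (simp add: mem_Sh)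
    finally have "infdist x Flam \<le> 2 * h"
      using infdist_triangle[of x Flam z] z(1) by (simp add: mem_Sh dist_commute)
    then show ?thesis using Segs_subset_box[OF 2] z(1) box_subset_cbox by (auto simp: mem_thick_iff mem_Sh)
  qed
qed

lemma C1_piece:
  assumes "C1h M x"
  shows "M \<in> Ms" "x \<in> M" "x \<in> Segs"
  using assms by (simp_all add: C1_def)

lemma C1_iff:
  assumes "M \<in> Ms" "x \<in> M" "x \<in> Segs"
  shows "C1h M x \<longleftrightarrow> M \<inter> Fup = {} \<or> 2 * h \<le> C1_gauge M x"
  using assms by (cases "M \<inter> Fup = {}")
    (auto simp: C1_def C1_gauge_def sdist_def dist_norm)

lemma C1_unique: "C1h M x \<Longrightarrow> C1h M' x \<Longrightarrow> M' = M"
  using piece_unique C1_piece by metis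

lemma C1_of_piece:
  assumes "C1h M' y" "M \<in> Ms" "y \<in> M"
  shows "C1h M y"
  using piece_unique[OF C1_piece(1)[OF assms(1)] assms(2) C1_piece(2)[OF assms(1)] assms(3)] assms(1)
  by simp

lemma The_C1: "C1h M x \<Longrightarrow> (THE M. C1h M x) = M"
  by (rule the_equality) (assumption, rule C1_unique)

lemma Phi_C1: "C1h M x \<Longrightarrow> Phi x = retract M x"
proof -
  assume c: "C1h M x"
  then have "\<exists>M. C1h M x" by blast
  then show ?thesis
    unfolding Fmap_def case_prod_conv if_P[OF \<open>\<exists>M. C1h M x\<close>] Let_def The_C1[OF c]
    by (simp add: retract_def retract_dist_def)
qed

lemma Phi_not_C1: "\<nexists>M. C1h M x \<Longrightarrow> Phi x = x"
  by (simp add: Fmap_def)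

text \<open>Not a simplification rule: the right-hand side contains \<open>Fh (x, 1)\<close>.\<close>

lemma Fmap_eq: "Fh (x, t) = (1 - t) *\<^sub>R x + t *\<^sub>R Phi x"
proof (cases "\<exists>M. C1h M x")
  case True
  then obtain M where "C1h M x" by blast
  then show ?thesis
    unfolding Fmap_def case_prod_conv if_P[OF True] Let_def The_C1[OF \<open>C1h M x\<close>] by simp
qed (simp add: Fmap_def algebra_simps)

lemma retract_dist_nonneg: "0 \<le> retract_dist M x"
  by (simp add: retract_dist_def pospart_term_def)

lemma C1_retract_dist:
  assumes "C1h M x"
  shows "0 < dist x (\<xi> x)" "retract_dist M x \<le> dist x (\<xi> x)"
proof -
  note x = C1_piece[OF assms]
  show "0 < dist x (\<xi> x)" using piece_disjoint_Gamma[OF x(1,2)] Segs_nearest(4)[OF x(3)] by auto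
  show "retract_dist M x \<le> dist x (\<xi> x)"
  proof (cases "M \<inter> Fup = {}")
    case False
    then have "2 * h - dist x (\<xi> x) \<le> infdist (\<xi> x) (M \<inter> Fup)"
      using assms by (simp add: C1_def sdist_def dist_norm)
    then show ?thesis
      using False Segs_nearest(2,5)[OF x(3)] infdist_nonneg[of x \<Gamma>]
      by (simp add: retract_dist_def pospart_term_def)
  qed (simp add: retract_dist_def pospart_term_def)
qed

lemma retract_eq_segment:
  assumes c: "C1h M x"
  defines "\<theta> \<equiv> retract_dist M x / dist x (\<xi> x)"
  shows "retract M x = (1 - \<theta>) *\<^sub>R \<xi> x + \<theta> *\<^sub>R x" "0 \<le> \<theta>" "\<theta> \<le> 1"
  using C1_retract_dist[OF c] retract_dist_nonneg[of M x]
  by (auto simp: retract_def \<theta>_def dist_norm algebra_simps divide_le_eq_1)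

lemma retract_in_segment: "C1h M x \<Longrightarrow> retract M x \<in> closed_segment (\<xi> x) x"
  using retract_eq_segment[of M x] by (auto simp: closed_segment_def)

lemma dist_retract_xi:
  assumes "C1h M x"
  shows "dist (retract M x) (\<xi> x) = retract_dist M x"
proof -
  have "0 < norm (x - \<xi> x)" using C1_retract_dist(1)[OF assms] by (simp add: dist_norm)
  then show ?thesis using retract_dist_nonneg[of M x] by (simp add: retract_def dist_norm)
qed

lemma dist_retract: "C1h M x \<Longrightarrow> dist (retract M x) x = dist x (\<xi> x) - retract_dist M x"
  using dist_add_closed_segment[OF retract_in_segment, of M x] dist_retract_xi[of M x]
  by (simp add: dist_commute)

lemma Fmap_in_Kh:
  assumes x: "x \<in> Kh" and t: "0 \<le> t" "t \<le> 1"
  shows "Fh (x, t) \<in> Kh"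
proof (cases "\<exists>M. C1h M x")
  case True
  then obtain M where c: "C1h M x" by blast
  have "Fh (x, t) = (1 - t) *\<^sub>R x + t *\<^sub>R retract M x" using Fmap_eq[of x t] Phi_C1[OF c] by simp
  then have "Fh (x, t) \<in> closed_segment x (retract M x)" using t by (auto simp: closed_segment_def)
  also have "\<dots> \<subseteq> closed_segment x (\<xi> x)"
    using retract_in_segment[OF c] by (simp add: subset_closed_segment closed_segment_commute)
  also have "\<dots> \<subseteq> Segs" using closed_segment_xi_subset_Segs C1_piece(3)[OF c] by blast
  finally show ?thesis by (simp add: Kset_def)
next
  case False
  then have "Fh (x, t) = x" using Fmap_eq[of x t] Phi_not_C1[of x] by (simp add: scaleR_collapse)
  then show ?thesis using x by simp
qed

lemma sublevel_subset_Fup: "Flam \<subseteq> Fup"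
proof -
  have "0 \<le> L * h powr \<alpha>" using L_nonneg by simp
  then show ?thesis by (auto simp: sublevel_def)
qed

lemma sublevel_subset_Kh: "Flam \<subseteq> Kh"
  using h_pos by (auto simp: Kset_def mem_thick_iff sublevel_def)

lemma Segs_in_Sh:
  assumes x: "x \<in> Segs" and far: "h \<le> dist x (\<xi> x)"
  shows "x \<in> Sh"
proof -
  obtain z where z: "z \<in> Sh" "x \<in> closed_segment z (\<xi> z)" using x by (rule SegsE)
  have ne: "\<Gamma> \<noteq> {}" and zR: "infdist z \<Gamma> < R" using z(1) h_pos h_less by (auto simp: mem_Sh)
  have "dist z (\<xi> z) = dist z x + dist x (\<xi> z)" using dist_add_closed_segment[OF z(2)] .
  moreover have "dist z (\<xi> z) \<le> h" using z(1) nearest_Gamma(2)[OF ne zR] by (simp add: mem_Sh)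
  moreover have "h \<le> dist x (\<xi> z)" using xi_Gamma_closed_segment(3)[OF ne zR z(2)] far by simp
  ultimately have "dist z x = 0" using zero_le_dist[of z x] by linarith
  then show ?thesis using z(1) by simp
qed

lemma sublevel_not_C1: "x \<in> Flam \<Longrightarrow> \<not> C1h M x"
proof
  assume xF: "x \<in> Flam" and c: "C1h M x"
  have xM: "x \<in> M \<inter> Fup" using C1_piece(2)[OF c] xF sublevel_subset_Fup by blast
  then have "M \<inter> Fup \<noteq> {}" by blast
  then have "2 * h - dist x (\<xi> x) \<le> dist (\<xi> x) x"
    using c infdist_le[OF xM, of "\<xi> x"]
    by (simp add: C1_def sdist_nonempty dist_norm norm_minus_commute)
  then have "x \<in> Sh" using Segs_in_Sh[OF C1_piece(3)[OF c]] by (simp add: dist_commute)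
  then show False using xM by (simp add: mem_Sh)
qed

lemma sublevel_subset_Gh: "Flam \<subseteq> Gh"
proof
  fix x assume "x \<in> Flam"
  then have "Phi x = x" using sublevel_not_C1 Phi_not_C1 by blast
  then show "x \<in> Gh" using sublevel_subset_Kh \<open>x \<in> Flam\<close> unfolding Gset_def by force
qed

lemma Gamma_not_C1: "x \<in> \<Gamma> \<Longrightarrow> \<not> C1h M x"
  using piece_disjoint_Gamma C1_piece by blast

lemma retract_dist_pos:
  assumes "0 < retract_dist M x"
  shows "M \<inter> Fup \<noteq> {}" "retract_dist M x = 2 * h - infdist (\<xi> x) (M \<inter> Fup)"
  using assms by (auto simp: retract_dist_def pospart_term_def split: if_splits)

lemma retract_in_piece:
  assumes c: "C1h M x" and pos: "0 < retract_dist M x"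
  shows "retract M x \<in> M"
proof -
  note piece = C1_piece[OF c] and near = Segs_nearest[OF C1_piece(3)[OF c]]
  have "retract M x \<noteq> \<xi> x" using dist_retract_xi[OF c] pos by auto
  then show ?thesis
    using closed_segment_xi_subset_piece[OF piece(1,2) near(1,3)] retract_in_segment[OF c]
    by (simp add: closed_segment_commute)
qed

text \<open>A retracted point \<open>a\<close> keeps the nearest point of \<open>x\<close> and lies at distance
  \<open>retract_dist M x\<close> from it, so (C1) holds for \<open>a\<close> with equality and \<open>a\<close> is retracted to itself.\<close>

lemma Phi_idem:
  assumes "a \<in> Gh"
  shows "Phi a = a"
proof -
  obtain x where x: "x \<in> Kh" "a = Phi x" using assms unfolding Gset_def by blast
  show ?thesis
  proof (cases "\<exists>M. C1h M x")
    case False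
    then show ?thesis using x(2) Phi_not_C1 by simp
  next
    case True
    then obtain M where c: "C1h M x" by blast
    note piece = C1_piece[OF c] and near = Segs_nearest[OF C1_piece(3)[OF c]]
    have a: "a = retract M x" using x(2) Phi_C1[OF c] by simp
    show ?thesis
    proof (cases "retract_dist M x = 0")
      case True
      then have "a \<in> \<Gamma>" using a near(4) by (simp add: retract_def)
      then show ?thesis using Gamma_not_C1 Phi_not_C1 by blast
    next
      case False
      then have pos: "0 < retract_dist M x" using retract_dist_nonneg[of M x] by simp
      note ne = retract_dist_pos(1)[OF pos] and eq = retract_dist_pos(2)[OF pos]
      have seg: "a \<in> closed_segment x (\<xi> x)"
        using retract_in_segment[OF c] a by (simp add: closed_segment_commute)
      have da: "dist a (\<xi> x) = retract_dist M x" using dist_retract_xi[OF c] a by simp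
      have aM: "a \<in> M" using retract_in_piece[OF c pos] a by simp
      have aS: "a \<in> Segs" using closed_segment_xi_subset_Segs[OF piece(3)] seg by blast
      have xia: "\<xi> a = \<xi> x" using xi_Gamma_closed_segment(3)[OF near(1,3) seg] .
      have ca: "C1h M a"
        using piece(1) aM aS ne eq da xia by (simp add: C1_def sdist_nonempty dist_norm)
      have "retract_dist M a = retract_dist M x" by (simp add: retract_dist_def xia)
      then show ?thesis
        using Phi_C1[OF ca] da xia pos by (simp add: retract_def dist_norm)
    qed
  qed
qed

lemma bound_split: "lam + L * (1 + 3 powr \<alpha>) * h powr \<alpha> = lam + L * h powr \<alpha> + L * (3 * h) powr \<alpha>"
  using h_pos by (simp add: powr_mult algebra_simps)

lemma f_bound_Gamma:
  assumes "y \<in> Kh" "y \<in> \<Gamma>"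
  shows "f y \<le> lam + L * (2 * h) powr \<alpha>"
proof (rule le_of_near_sublevel)
  show "y \<in> thick Flam (2 * h)" using Kh_subset_thick assms(1) by blast
  show "0 < 2 * h" "0 < R - 2 * h" using h_pos h_less by simp_all
  show "y \<in> closure Q" if "Q \<in> Ms" "q \<in> Q" "dist q y < 2 * h + (R - 2 * h)" for Q q
    using Gamma_in_closure_of_near_piece[OF assms(2) that(1,2)] that(3) by simp
qed

lemma f_bound_outside_box:
  assumes y: "y \<in> Kh" "y \<notin> box 0 One"
  shows "f y \<le> lam + L * h powr \<alpha>"
proof (rule le_of_near_sublevel)
  show yt: "y \<in> thick Flam h" using y Segs_subset_box by (auto simp: Kset_def)
  show "0 < h" "0 < R - h" using h_pos h_less by simp_all
  have yf: "y \<in> frontier cube" using yt y(2) by (simp add: mem_thick_iff frontier_cbox)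
  show "y \<in> closure Q" if Q: "Q \<in> Ms" "q \<in> Q" and qy: "dist q y < h + (R - h)" for Q q
  proof (rule closure_piece_of_near_point[OF Q])
    show "y \<in> cube" using yt by (simp add: mem_thick_iff)
    show "dist q y < dist s y" if "s \<in> \<Gamma>" for s
      using Gamma_far_from_frontier[OF that yf] qy by simp
  qed
qed

lemma f_bound_far_from_Gamma:
  assumes M: "M \<in> Ms" "y \<in> M" and yt: "y \<in> thick Flam h" and far: "\<Gamma> = {} \<or> h < infdist y \<Gamma>"
  shows "f y \<le> lam + L * h powr \<alpha>"
proof (rule le_of_near_sublevel[OF yt h_pos])
  define e0 where "e0 = (if \<Gamma> = {} then 1 else infdist y \<Gamma> - h)"
  show "0 < e0" using far by (auto simp: e0_def)
  show "y \<in> closure Q" if Q: "Q \<in> Ms" "q \<in> Q" and qy: "dist q y < h + e0" for Q q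
  proof (rule closure_piece_of_near_point[OF Q])
    show "y \<in> cube" using yt by (simp add: mem_thick_iff)
    show "dist q y < dist s y" if "s \<in> \<Gamma>" for s
    proof -
      have "infdist y \<Gamma> \<le> dist y s" "\<Gamma> \<noteq> {}" using infdist_le[OF that] that by auto
      then show ?thesis using qy by (simp add: e0_def dist_commute)
    qed
  qed
qed

lemma Kh_piece_in_Fup:
  assumes y: "y \<in> Kh" "M \<in> Ms" "y \<in> M" "y \<notin> Segs"
  shows "y \<in> Fup"
proof (rule ccontr)
  assume yF: "y \<notin> Fup"
  have yt: "y \<in> thick Flam h" using y by (auto simp: Kset_def)
  show False
  proof (cases "\<Gamma> \<noteq> {} \<and> infdist y \<Gamma> \<le> h")
    case True
    then have "y \<in> Sh" using yF yt by (auto simp: mem_Sh mem_thick_iff)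
    then have "y \<in> Segs" by (auto simp: segs_def)
    then show False using y(4) by blast
  next
    case False
    then have "f y \<le> lam + L * h powr \<alpha>" using f_bound_far_from_Gamma[OF y(2,3) yt] by auto
    then show False using yF yt by (simp add: sublevel_def mem_thick_iff)
  qed
qed

lemma f_bound_not_C1:
  assumes y: "y \<in> Kh" and nc: "\<nexists>M. C1h M y"
  shows "f y \<le> lam + L * (1 + 3 powr \<alpha>) * h powr \<alpha>"
proof -
  have hh: "0 \<le> L * h powr \<alpha>" "L * (2 * h) powr \<alpha> \<le> L * (3 * h) powr \<alpha>" "0 \<le> L * (2 * h) powr \<alpha>"
    using L_nonneg h_pos L_powr_mono[of "2 * h" "3 * h"] by simp_all
  have "y \<in> \<Gamma> \<or> y \<notin> box 0 One \<or> (\<exists>M\<in>Ms. y \<in> M)"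
    using box_minus_Gamma_subset_pieces by blast
  then consider "y \<in> \<Gamma>" | "y \<notin> box 0 One" | M where "M \<in> Ms" "y \<in> M" "y \<in> Segs"
    | M where "M \<in> Ms" "y \<in> M" "y \<notin> Segs" by blast
  then show ?thesis
  proof cases
    case 1
    then show ?thesis using f_bound_Gamma[OF y] hh bound_split by linarith
  next
    case 2
    then show ?thesis using f_bound_outside_box[OF y] hh bound_split by linarith
  next
    case (3 M)
    then have ne: "M \<inter> Fup \<noteq> {}" and "C1_gauge M y < 2 * h" using nc C1_iff[OF 3] by auto
    then have "infdist (\<xi> y) (M \<inter> Fup) < 2 * h - dist y (\<xi> y)" by (simp add: C1_gauge_def)
    then obtain a where a: "a \<in> M \<inter> Fup" "dist (\<xi> y) a < 2 * h - dist y (\<xi> y)"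
      by (rule infdist_lessE[OF ne])
    then have "dist y a < 2 * h" using dist_triangle[of y a "\<xi> y"] by linarith
    then have "f y \<le> f a + L * (2 * h) powr \<alpha>"
      using holder[OF 3(1,2), of a] a(1) L_powr_mono[of "norm (y - a)" "2 * h"] by (simp add: dist_norm)
    moreover have "f a \<le> lam + L * h powr \<alpha>" using a(1) by (simp add: sublevel_def)
    ultimately show ?thesis using hh bound_split by linarith
  next
    case (4 M)
    then have "f y \<le> lam + L * h powr \<alpha>" using Kh_piece_in_Fup[OF y] by (simp add: sublevel_def)
    then show ?thesis using hh bound_split by linarith
  qed
qed

lemma f_bound_retract:
  assumes c: "C1h M x" and pos: "0 < retract_dist M x"
  shows "f (retract M x) \<le> lam + L * (1 + 3 powr \<alpha>) * h powr \<alpha>"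
proof -
  note ne = retract_dist_pos(1)[OF pos] and eq = retract_dist_pos(2)[OF pos]
  obtain b where b: "b \<in> M \<inter> Fup" "dist (\<xi> x) b < 3 * h - retract_dist M x"
    using infdist_lessE[OF ne, of "\<xi> x" "3 * h - retract_dist M x"] eq h_pos by auto
  have "dist (retract M x) b < 3 * h"
    using dist_triangle[of "retract M x" b "\<xi> x"] dist_retract_xi[OF c] b(2) by linarith
  then have "f (retract M x) \<le> f b + L * (3 * h) powr \<alpha>"
    using holder[OF C1_piece(1)[OF c] retract_in_piece[OF c pos], of b] b(1)
      L_powr_mono[of "norm (retract M x - b)" "3 * h"] by (simp add: dist_norm)
  moreover have "f b \<le> lam + L * h powr \<alpha>" using b(1) by (simp add: sublevel_def)
  ultimately show ?thesis using bound_split by linarith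
qed

lemma Gh_subset_sublevel: "Gh \<subseteq> sublevel f (lam + L * (1 + 3 powr \<alpha>) * h powr \<alpha>)"
proof
  fix y assume "y \<in> Gh"
  then obtain x where x: "x \<in> Kh" "y = Phi x" unfolding Gset_def by blast
  have yK: "y \<in> Kh" using Fmap_in_Kh[OF x(1), of 1] x(2) by simp
  have "f y \<le> lam + L * (1 + 3 powr \<alpha>) * h powr \<alpha>"
  proof (cases "\<exists>M. C1h M x")
    case False
    then show ?thesis using f_bound_not_C1[OF x(1)] x(2) Phi_not_C1 by simp
  next
    case True
    then obtain M where c: "C1h M x" by blast
    show ?thesis
    proof (cases "retract_dist M x = 0")
      case True
      then have "y \<in> \<Gamma>"
        using x(2) Phi_C1[OF c] Segs_nearest(4)[OF C1_piece(3)[OF c]] by (simp add: retract_def)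
      then show ?thesis using f_bound_not_C1[OF yK] Gamma_not_C1 by blast
    next
      case False
      then show ?thesis
        using f_bound_retract[OF c] retract_dist_nonneg[of M x] x(2) Phi_C1[OF c] by simp
    qed
  qed
  then show "y \<in> sublevel f (lam + L * (1 + 3 powr \<alpha>) * h powr \<alpha>)"
    using yK Kh_subset_thick by (auto simp: sublevel_def mem_thick_iff)
qed

lemma continuous_on_C1_gauge: "\<Gamma> \<noteq> {} \<Longrightarrow> continuous_on {y. infdist y \<Gamma> < R} (C1_gauge M)"
  unfolding C1_gauge_def using continuous_on_xi_Gamma
  by (intro continuous_intros continuous_on_infdist) auto

lemma isCont_C1_gauge: "x \<in> Segs \<Longrightarrow> isCont (C1_gauge M) x"
  using continuous_on_C1_gauge[OF Segs_nearest(1)] open_infdist_less Segs_nearest(3)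
    continuous_on_eq_continuous_at by blast

lemma continuous_on_retract:
  assumes M: "M \<in> Ms" and ne: "\<Gamma> \<noteq> {}"
  shows "continuous_on ({y. infdist y \<Gamma> < R} \<inter> M) (retract M)"
proof -
  let ?W = "{y. infdist y \<Gamma> < R} \<inter> M"
  have xi: "continuous_on ?W \<xi>" using continuous_on_xi_Gamma[OF ne] by (rule continuous_on_subset) blast
  have "continuous_on ?W (retract_dist M)"
  proof (cases "M \<inter> Fup = {}")
    case False
    then have "retract_dist M = (\<lambda>y. max (2 * h - infdist (\<xi> y) (M \<inter> Fup)) 0)"
      by (simp add: fun_eq_iff retract_dist_def pospart_term_def)
    then show ?thesis using xi by (auto intro!: continuous_intros continuous_on_infdist)
  qed (simp add: retract_dist_def pospart_term_def)
  moreover have "norm (y - \<xi> y) \<noteq> 0" if "y \<in> ?W" for y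
    using that nearest_Gamma(1)[OF ne] piece_disjoint_Gamma[OF M] by fastforce
  ultimately show ?thesis
    unfolding retract_def using xi by (intro continuous_intros) auto
qed

lemma dist_Phi_le_infdist: "dist (Phi y) y \<le> infdist y \<Gamma>"
proof (cases "\<exists>M. C1h M y")
  case True
  then obtain M where c: "C1h M y" by blast
  then show ?thesis
    using Phi_C1[OF c] dist_retract[OF c] retract_dist_nonneg[of M y] Segs_nearest(5)[OF C1_piece(3)[OF c]]
    by simp
qed (simp add: Phi_not_C1 infdist_nonneg)

lemma dist_Phi_le_near_Fup:
  assumes M: "M \<in> Ms" "y \<in> M" and x: "x \<in> M \<inter> Fup"
  shows "dist (Phi y) y \<le> dist y x"
proof (cases "\<exists>M'. C1h M' y")
  case True
  then obtain M' where "C1h M' y" by blast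
  then have c: "C1h M y" using C1_of_piece M by blast
  have "infdist (\<xi> y) (M \<inter> Fup) \<le> dist (\<xi> y) y + dist y x"
    using infdist_le[OF x, of "\<xi> y"] dist_triangle[of "\<xi> y" x y] by linarith
  moreover have "2 * h - infdist (\<xi> y) (M \<inter> Fup) \<le> retract_dist M y"
    using x by (auto simp: retract_dist_def pospart_term_def)
  moreover have "dist y (\<xi> y) \<le> h" using Segs_nearest(2,5)[OF C1_piece(3)[OF c]] by simp
  ultimately show ?thesis using Phi_C1[OF c] dist_retract[OF c] by (simp add: dist_commute)
qed (simp add: Phi_not_C1)

lemma eventually_not_C1_frontier:
  assumes "x \<in> cube" "x \<notin> box 0 One"
  shows "eventually (\<lambda>y. \<nexists>M. C1h M y) (at x)"
proof -
  have "\<nexists>M. C1h M y" if "dist y x < R - h" for y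
  proof
    assume "\<exists>M. C1h M y"
    then obtain M where "C1h M y" by blast
    note near = Segs_nearest[OF C1_piece(3)[OF this]]
    have "infdist x \<Gamma> < R" using infdist_triangle[of x \<Gamma> y] near(2) that by (simp add: dist_commute)
    then obtain g where "g \<in> \<Gamma>" "dist x g < R" using infdist_lessE[OF near(1)] by blast
    then show False
      using Gamma_far_from_frontier[of g x] assms by (simp add: frontier_cbox dist_commute)
  qed
  then show ?thesis using h_less h_pos unfolding eventually_at by (intro exI[of _ "R - h"]) auto
qed

lemma eventually_not_C1_Segs:
  assumes M: "M \<in> Ms" "x \<in> M" and x: "x \<in> Segs" and nc: "\<not> C1h M x"
  shows "eventually (\<lambda>y. \<nexists>M'. C1h M' y) (at x)"
proof -
  have ne: "M \<inter> Fup \<noteq> {}" and "C1_gauge M x < 2 * h" using nc C1_iff[OF M x] by auto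
  moreover have "isCont (C1_gauge M) x" using isCont_C1_gauge[OF x] .
  ultimately have "eventually (\<lambda>y. C1_gauge M y < 2 * h) (at x)"
    by (simp add: isCont_def order_tendstoD(2))
  moreover have "eventually (\<lambda>y. y \<in> M) (at x)" using eventually_in_piece[OF M] .
  ultimately show ?thesis
  proof eventually_elim
    case (elim y)
    show ?case
    proof
      assume "\<exists>M'. C1h M' y"
      then obtain M' where c': "C1h M' y" by blast
      then have "C1h M y" using C1_of_piece M(1) elim(2) by blast
      then show False using C1_iff[OF M(1) elim(2) C1_piece(3)[OF c']] elim(1) ne by auto
    qed
  qed
qed

text \<open>Equality in (C1) would make \<open>retract M x = x\<close>. Both conclusions are open conditions, so
  (C1) persists near a point that \<open>Phi\<close> moves.\<close>

lemma C1_gauge_gt: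
  assumes c: "C1h M x" and moved: "retract M x \<noteq> x" and ne: "M \<inter> Fup \<noteq> {}"
  shows "2 * h < C1_gauge M x" "0 < infdist x (M \<inter> Fup)"
proof -
  note piece = C1_piece[OF c] and near = Segs_nearest[OF C1_piece(3)[OF c]]
  have "retract_dist M x \<noteq> dist x (\<xi> x)"
    using moved retract_eq_segment(1)[OF c] C1_retract_dist(1)[OF c] by auto
  moreover have "2 * h \<le> C1_gauge M x" using C1_iff[OF piece] c ne by simp
  ultimately show gt: "2 * h < C1_gauge M x"
    using ne by (auto simp: C1_gauge_def retract_dist_def pospart_term_def)
  have "infdist (\<xi> x) (M \<inter> Fup) \<le> infdist x (M \<inter> Fup) + dist x (\<xi> x)"
    using infdist_triangle[of "\<xi> x" "M \<inter> Fup" x] by (simp add: dist_commute)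
  then show "0 < infdist x (M \<inter> Fup)" using gt near(2,5) by (simp add: C1_gauge_def)
qed

lemma eventually_C1:
  assumes c: "C1h M x" and moved: "retract M x \<noteq> x"
  shows "eventually (\<lambda>y. y \<in> Kh \<longrightarrow> C1h M y) (at x)"
proof -
  note piece = C1_piece[OF c]
  have evM: "eventually (\<lambda>y. y \<in> M) (at x)" using eventually_in_piece piece by blast
  show ?thesis
  proof (cases "M \<inter> Fup = {}")
    case True
    from evM show ?thesis
    proof eventually_elim
      case (elim y)
      show ?case using C1_iff[OF piece(1) elim] Kh_piece_in_Fup[of y M] piece(1) elim True by blast
    qed
  next
    case False
    note gt = C1_gauge_gt[OF c moved False]
    have "isCont (C1_gauge M) x" using isCont_C1_gauge[OF piece(3)] .
    then have "eventually (\<lambda>y. 2 * h < C1_gauge M y) (at x)"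
      using gt(1) by (simp add: isCont_def order_tendstoD(1))
    moreover have "eventually (\<lambda>y. dist y x < infdist x (M \<inter> Fup)) (at x)"
      using gt(2) eventually_at by blast
    ultimately show ?thesis using evM
    proof eventually_elim
      case (elim y)
      have "y \<notin> M \<inter> Fup" using elim(2) infdist_le[of y "M \<inter> Fup" x] by (auto simp: dist_commute)
      then show ?case using C1_iff[OF piece(1) elim(3)] Kh_piece_in_Fup[of y M] piece(1) elim by auto
    qed
  qed
qed

lemma continuous_Phi_C1:
  assumes c: "C1h M x"
  shows "continuous (at x within Kh) Phi"
proof -
  note piece = C1_piece[OF c] and near = Segs_nearest[OF C1_piece(3)[OF c]]
  have "isCont (retract M) x"
    using continuous_on_retract[OF piece(1) near(1)] open_Int[OF open_infdist_less open_piece[OF piece(1)]]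
      near(3) piece(2) continuous_on_eq_continuous_at by blast
  then have lim: "(retract M \<longlongrightarrow> retract M x) (at x within Kh)"
    by (simp add: isCont_def tendsto_within_subset[of _ _ _ UNIV])
  have evM: "eventually (\<lambda>y. y \<in> M) (at x within Kh)"
    using eventually_in_piece[OF piece(1,2)] by (auto intro: filter_leD[OF at_le])
  show ?thesis
  proof (cases "retract M x = x")
    case False
    have "eventually (\<lambda>y. y \<in> Kh \<longrightarrow> C1h M y) (at x within Kh)"
      using eventually_C1[OF c False] by (auto intro: filter_leD[OF at_le])
    moreover have "eventually (\<lambda>y. y \<in> Kh) (at x within Kh)" by (simp add: eventually_at_filter)
    ultimately have "eventually (\<lambda>y. retract M y = Phi y) (at x within Kh)"
      by eventually_elim (simp add: Phi_C1)
    then show ?thesis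
      using Lim_transform_eventually[OF lim] Phi_C1[OF c] by (simp add: continuous_within)
  next
    case True
    have ev: "eventually (\<lambda>y. dist (Phi y) x \<le> dist (retract M y) x + dist y x) (at x within Kh)"
      using evM
    proof eventually_elim
      case (elim y)
      show ?case
        using C1_of_piece[OF _ piece(1) elim] Phi_C1[of M y] Phi_not_C1[of y] by fastforce
    qed
    have "((\<lambda>y. dist (retract M y) x + dist y x) \<longlongrightarrow> dist (retract M x) x + dist x x) (at x within Kh)"
      by (intro tendsto_intros lim)
    then have lim0: "((\<lambda>y. dist (retract M y) x + dist y x) \<longlongrightarrow> 0) (at x within Kh)" using True by simp
    have "((\<lambda>y. dist (Phi y) x) \<longlongrightarrow> 0) (at x within Kh)"
      by (rule tendsto_sandwich[OF _ ev tendsto_const lim0]) simp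
    then show ?thesis
      using Phi_C1[OF c] True tendsto_dist_iff[THEN iffD2] by (simp add: continuous_within)
  qed
qed

lemma eventually_dist_Phi_le:
  assumes x: "x \<in> Kh" and nc: "\<nexists>M. C1h M x"
  shows "eventually (\<lambda>y. dist (Phi y) y \<le> dist y x) (at x)"
proof -
  have "x \<in> cube" using x Kh_subset_thick by (auto simp: mem_thick_iff)
  then consider "x \<in> \<Gamma>" | "x \<notin> box 0 One" | M where "M \<in> Ms" "x \<in> M"
    using box_minus_Gamma_subset_pieces by blast
  then show ?thesis
  proof cases
    case 1
    have "dist (Phi y) y \<le> dist y x" for y
      using dist_Phi_le_infdist[of y] infdist_le[OF 1, of y] by linarith
    then show ?thesis by (simp add: always_eventually)
  next
    case 2
    from eventually_not_C1_frontier[OF \<open>x \<in> cube\<close> 2] show ?thesis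
      by (rule eventually_mono) (simp add: Phi_not_C1)
  next
    case (3 M)
    show ?thesis
    proof (cases "x \<in> Segs")
      case True
      from eventually_not_C1_Segs[OF 3 True] nc show ?thesis
        by (auto elim!: eventually_mono simp: Phi_not_C1)
    next
      case False
      then have "x \<in> M \<inter> Fup" using Kh_piece_in_Fup[OF x 3] 3 by blast
      from eventually_in_piece[OF 3] show ?thesis
        by (rule eventually_mono) (rule dist_Phi_le_near_Fup[OF 3(1) _ \<open>x \<in> M \<inter> Fup\<close>])
    qed
  qed
qed

lemma continuous_Phi:
  assumes x: "x \<in> Kh"
  shows "continuous (at x within Kh) Phi"
proof (cases "\<exists>M. C1h M x")
  case True
  then obtain M where "C1h M x" by blast
  then show ?thesis by (rule continuous_Phi_C1)
next
  case False
  then have fixed: "Phi x = x" by (rule Phi_not_C1)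
  have "eventually (\<lambda>y. dist (Phi y) y \<le> dist y x) (at x within Kh)"
    using filter_leD[OF at_le[OF subset_UNIV] eventually_dist_Phi_le[OF x False]] .
  then show ?thesis by (rule continuous_within_fixed_point[where \<Phi>="\<lambda>y. Phi y", OF fixed])
qed

lemma deformation_retraction_Fmap: "deformation_retraction Kh Gh Fh"
  unfolding deformation_retraction_def
proof (intro conjI ballI)
  show "Gh \<subseteq> Kh" using Fmap_in_Kh[of _ 1] by (auto simp: Gset_def)
  have "continuous_on Kh (\<lambda>x. Phi x)"
    by (rule continuous_on_eq_continuous_within[THEN iffD2]) (rule ballI, rule continuous_Phi)
  then have "continuous_on (Kh \<times> {0..1}) (\<lambda>p. Phi (fst p))"
    by (rule continuous_on_compose2[OF _ continuous_on_fst]) auto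
  then have "continuous_on (Kh \<times> {0..1}) (\<lambda>p. (1 - snd p) *\<^sub>R fst p + snd p *\<^sub>R Phi (fst p))"
    by (intro continuous_intros)
  moreover have "Fh p = (1 - snd p) *\<^sub>R fst p + snd p *\<^sub>R Phi (fst p)" for p
    using Fmap_eq[of "fst p" "snd p"] by (simp only: prod.collapse)
  then have "continuous_on (Kh \<times> {0..1}) Fh =
      continuous_on (Kh \<times> {0..1}) (\<lambda>p. (1 - snd p) *\<^sub>R fst p + snd p *\<^sub>R Phi (fst p))"
    by (intro continuous_on_cong refl)
  ultimately show "continuous_on (Kh \<times> {0..1}) Fh" by simp
  show "Fh ` (Kh \<times> {0..1}) \<subseteq> Kh" using Fmap_in_Kh by auto
  fix x assume "x \<in> Kh"
  then show "Fh (x, 0) = x" "Phi x \<in> Gh" using Fmap_eq[of x 0] by (auto simp: Gset_def)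
next
  fix a assume "a \<in> Gh"
  then show "Phi a = a" by (rule Phi_idem)
qed

end

theorem lemma2:
  fixes f :: "'a::euclidean_space \<Rightarrow> real" and Ms :: "'a set set"
    and Mb L \<alpha> R h lam :: real
  assumes "in_S f Ms Mb L \<alpha> R"
    and "0 < h" and "h < R / 2"
  shows "deformation_retraction (Kset f Ms L \<alpha> lam h) (Gset f Ms L \<alpha> lam h) (Fmap f Ms L \<alpha> lam h)
    \<and> thick (sublevel f lam) h \<subseteq> Kset f Ms L \<alpha> lam h
    \<and> Kset f Ms L \<alpha> lam h \<subseteq> thick (sublevel f lam) (2 * h)
    \<and> sublevel f lam \<subseteq> Gset f Ms L \<alpha> lam h
    \<and> Gset f Ms L \<alpha> lam h \<subseteq> sublevel f (lam + L * (1 + 3 powr \<alpha>) * h powr \<alpha>)"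
proof -
  interpret sublevel_retraction f Ms Mb L \<alpha> R h lam
    using assms by unfold_locales auto
  have "thick Flam h \<subseteq> Kh" by (simp add: Kset_def)
  then show ?thesis
    using deformation_retraction_Fmap Kh_subset_thick sublevel_subset_Gh Gh_subset_sublevel by blast
qed

end
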